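(* Let $i\ge 1$ be an integer and let $\mathcal L_1,\mathcal L_2$ be countable classes of linear orders such that each $L\in\mathcal L_1\cup\mathcal L_2$ is isomorphic to a linear order of the form $\omega\cdot\mathbf i+K$ where $\omega\cdot\mathbf i$ is not isomorphic to any interval of $K$. Then $\mathcal L_1=\mathcal L_2$ (as classes of isomorphism types) if and only if $\mathrm{Shuf}(\mathcal L_1)\cong\mathrm{Shuf}(\mathcal L_2)$. Moreover, if $\mathrm{Shuf}(\mathcal L_1)$ contains an interval isomorphic to $\omega\cdot(\mathbf{i+1})$, then there is a linear order $K$ with $\omega\cdot(\mathbf{i+1})+K\in\mathcal L_1$ (up to isomorphism).
   Context: $\mathbf n$ is the finite linear order with $n$ elements, $\omega$ the order type of $(\mathbb N;\le)$, $L_1+L_2$ the ordered sum ($L_1$ before $L_2$), and $L_1\cdot L_2$ is the sum over $L_2$ of copies of $L_1$ (so $\omega\cdot\mathbf i$ is $i$ copies of $\omega$ in sequence). An interval is a convex subset. For a countable set $I$, a dense $I$-coloring of $\mathbb Q$ is a map $c:\mathbb Q\to I$ taking every value of $I$ between any two rationals; for $\mathcal L=\{L_j\mid j\in I\}$, $\mathrm{Shuf}(\mathcal L)=\sum_{x\in\mathbb Q}L_{c(x)}$ (independent of $c$ up to isomorphism). "$\mathcal L_1=\mathcal L_2$" means every member of each class is isomorphic to a member of the other; "$L\in\mathcal L$" means $\mathcal L$ contains an order isomorphic to $L$. *)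

theory Defs
  imports Main "HOL-Library.Countable_Set"
begin

text \<open>Linear orders are represented as reflexive relations (library notion Linear_order r,
  carrier Field r).\<close>

definition ord_iso :: "'a rel \<Rightarrow> 'b rel \<Rightarrow> bool" where
  "ord_iso r s \<longleftrightarrow> (\<exists>f. bij_betw f (Field r) (Field s) \<and>
     (\<forall>a\<in>Field r. \<forall>b\<in>Field r. (a, b) \<in> r \<longleftrightarrow> (f a, f b) \<in> s))"

definition is_interval :: "'a rel \<Rightarrow> 'a set \<Rightarrow> bool" where
  "is_interval r J \<longleftrightarrow> J \<subseteq> Field r \<and>
     (\<forall>x\<in>J. \<forall>z\<in>J. \<forall>y. (x, y) \<in> r \<and> (y, z) \<in> r \<longrightarrow> y \<in> J)"

definition osum :: "'a rel \<Rightarrow> 'b rel \<Rightarrow> ('a + 'b) rel" where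
  "osum r s = {(Inl a, Inl b) | a b. (a, b) \<in> r} \<union> {(Inr a, Inr b) | a b. (a, b) \<in> s}
     \<union> {(Inl a, Inr b) | a b. a \<in> Field r \<and> b \<in> Field s}"

definition omega_times :: "nat \<Rightarrow> (nat \<times> nat) rel" where
  "omega_times i = {((k, n), (k', n')) | k n k' n'. k < i \<and> k' < i \<and>
     (k < k' \<or> (k = k' \<and> n \<le> n'))}"

definition dense_coloring :: "'i set \<Rightarrow> (rat \<Rightarrow> 'i) \<Rightarrow> bool" where
  "dense_coloring I c \<longleftrightarrow> (\<forall>x. c x \<in> I) \<and>
     (\<forall>x y. x < y \<longrightarrow> (\<forall>j\<in>I. \<exists>z. x < z \<and> z < y \<and> c z = j))"

definition shuf_col :: "(rat \<Rightarrow> 'i) \<Rightarrow> ('i \<Rightarrow> 'a rel) \<Rightarrow> (rat \<times> 'a) rel" where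
  "shuf_col c L = {((x, a), (y, b)) | x a y b. a \<in> Field (L (c x)) \<and> b \<in> Field (L (c y)) \<and>
     (x < y \<or> (x = y \<and> (a, b) \<in> L (c x)))}"

definition Shuf :: "'i set \<Rightarrow> ('i \<Rightarrow> 'a rel) \<Rightarrow> (rat \<times> 'a) rel" where
  "Shuf I L = shuf_col (SOME c. dense_coloring I c) L"

definition class_eq :: "'i set \<Rightarrow> ('i \<Rightarrow> 'a rel) \<Rightarrow> 'j set \<Rightarrow> ('j \<Rightarrow> 'b rel) \<Rightarrow> bool" where
  "class_eq I L J M \<longleftrightarrow> (\<forall>i\<in>I. \<exists>j\<in>J. ord_iso (L i) (M j)) \<and> (\<forall>j\<in>J. \<exists>i\<in>I. ord_iso (M j) (L i))"

text \<open>L is isomorphic to omega\<cdot>i + K with omega\<cdot>i not isomorphic to any interval of K.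
  K can be taken on the carrier type of L (it is isomorphic to a final segment of L).\<close>
definition good_form :: "nat \<Rightarrow> 'a rel \<Rightarrow> bool" where
  "good_form i L \<longleftrightarrow> (\<exists>K :: 'a rel. Linear_order K \<and> ord_iso L (osum (omega_times i) K) \<and>
     \<not> (\<exists>J. is_interval K J \<and> ord_iso (omega_times i) (Restr K J)))"

end

theory Submission
  imports Defs
begin

text \<open>If the two classes agree, a back-and-forth
  argument along dense colourings of \<open>\<rat>\<close> matches the blocks of the two shuffles by isomorphic
  pairs. Conversely, call a point a start if it is the least point of an interval of type \<open>\<omega>\<cdot>i\<close>.
  In a block \<open>\<omega>\<cdot>i + K\<close> all starts lie in \<open>\<omega>\<cdot>i\<close>, because \<open>K\<close> has no interval of type \<open>\<omega>\<cdot>i\<close>,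
  so the starts inside one block are well-ordered, while between two different blocks they form an
  infinite descending chain (every block has a start and the blocks are densely ordered). Lying in
  the same block is thus expressed by the order alone, so an isomorphism of shuffles maps blocks
  onto isomorphic blocks. Finally, an interval of type \<open>\<omega>\<cdot>(i+1)\<close> is well-ordered, hence lies in a
  single block \<open>\<omega>\<cdot>i + K\<close>, and there it forces an initial segment of type \<open>\<omega>\<cdot>(i+1)\<close>.\<close>

lemma Linear_order_Refl: "Linear_order r \<Longrightarrow> Refl r"
  by (simp add: order_on_defs)

definition iso_on :: "('a \<Rightarrow> 'b) \<Rightarrow> 'a rel \<Rightarrow> 'b rel \<Rightarrow> bool" where
  "iso_on f r s \<longleftrightarrow> bij_betw f (Field r) (Field s) \<and>
     (\<forall>a\<in>Field r. \<forall>b\<in>Field r. (a, b) \<in> r \<longleftrightarrow> (f a, f b) \<in> s)"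

lemma ord_iso_iff_iso_on: "ord_iso r s \<longleftrightarrow> (\<exists>f. iso_on f r s)"
  by (simp add: ord_iso_def iso_on_def)

lemma iso_on_in_Field: "iso_on f r s \<Longrightarrow> a \<in> Field r \<Longrightarrow> f a \<in> Field s"
  by (auto simp: iso_on_def bij_betw_def)

lemma iso_on_iff: "iso_on f r s \<Longrightarrow> a \<in> Field r \<Longrightarrow> b \<in> Field r \<Longrightarrow> (f a, f b) \<in> s \<longleftrightarrow> (a, b) \<in> r"
  by (auto simp: iso_on_def)

lemma iso_on_eq_iff: "iso_on f r s \<Longrightarrow> a \<in> Field r \<Longrightarrow> b \<in> Field r \<Longrightarrow> f a = f b \<longleftrightarrow> a = b"
  by (auto simp: iso_on_def bij_betw_def inj_on_def)

lemma iso_on_surj: "iso_on f r s \<Longrightarrow> y \<in> Field s \<Longrightarrow> \<exists>x\<in>Field r. f x = y"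
  unfolding iso_on_def bij_betw_def by (metis imageE)

lemma iso_on_inv_into:
  assumes f: "iso_on f r s" shows "iso_on (inv_into (Field r) f) s r"
proof -
  have b: "bij_betw f (Field r) (Field s)" using f by (simp add: iso_on_def)
  have b': "bij_betw (inv_into (Field r) f) (Field s) (Field r)" using b by (rule bij_betw_inv_into)
  show ?thesis unfolding iso_on_def
  proof (intro conjI b' ballI)
    fix a b assume ab: "a \<in> Field s" "b \<in> Field s"
    let ?a = "inv_into (Field r) f a" and ?b = "inv_into (Field r) f b"
    have "?a \<in> Field r" "?b \<in> Field r" using ab b' by (auto simp: bij_betw_def)
    moreover have "f ?a = a" "f ?b = b" using ab b by (simp_all add: bij_betw_inv_into_right)
    ultimately show "(a, b) \<in> s \<longleftrightarrow> (?a, ?b) \<in> r" using iso_on_iff[OF f, of ?a ?b] by simp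
  qed
qed

lemma iso_on_comp:
  assumes f: "iso_on f r s" and g: "iso_on g s t" shows "iso_on (g \<circ> f) r t"
proof -
  have "bij_betw (g \<circ> f) (Field r) (Field t)"
    using assms unfolding iso_on_def using bij_betw_trans by blast
  then show ?thesis
    using iso_on_in_Field[OF f] iso_on_iff[OF f] iso_on_iff[OF g] unfolding iso_on_def by simp
qed

lemma ord_iso_refl: "ord_iso r r"
  unfolding ord_iso_iff_iso_on iso_on_def by (metis bij_betw_id id_apply)

lemma ord_iso_sym: "ord_iso r s \<Longrightarrow> ord_iso s r"
  unfolding ord_iso_iff_iso_on using iso_on_inv_into by blast

lemma ord_iso_trans: "ord_iso r s \<Longrightarrow> ord_iso s t \<Longrightarrow> ord_iso r t"
  unfolding ord_iso_iff_iso_on using iso_on_comp by blast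

lemma iso_on_Restr:
  assumes f: "iso_on f r s" and "Refl r" "Refl s" "A \<subseteq> Field r"
  shows "iso_on f (Restr r A) (Restr s (f ` A))"
proof -
  have "f ` A \<subseteq> Field s" using iso_on_in_Field[OF f] assms(4) by blast
  then have "Field (Restr r A) = A" "Field (Restr s (f ` A)) = f ` A"
    using assms Refl_Field_Restr2 by blast+
  moreover have "inj_on f A"
    using f assms(4) unfolding iso_on_def bij_betw_def by (blast intro: inj_on_subset)
  moreover have "(a, b) \<in> Restr r A \<longleftrightarrow> (f a, f b) \<in> Restr s (f ` A)" if "a \<in> A" "b \<in> A" for a b
    using that assms(4) iso_on_iff[OF f, of a b] by blast
  ultimately show ?thesis unfolding iso_on_def by (simp add: inj_on_imp_bij_betw)
qed

lemma ord_iso_Restr_image: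
  "iso_on f r s \<Longrightarrow> Refl r \<Longrightarrow> Refl s \<Longrightarrow> A \<subseteq> Field r \<Longrightarrow> ord_iso (Restr r A) (Restr s (f ` A))"
  using iso_on_Restr ord_iso_iff_iso_on by blast

lemma wf_Restr_diff_Id_iso_on:
  assumes f: "iso_on f r s" and A: "A \<subseteq> Field r" and "f ` A \<subseteq> B" and "wf (Restr (s - Id) B)"
  shows "wf (Restr (r - Id) A)"
proof (rule wf_subset)
  show "wf (inv_image (Restr (s - Id) B) f)" using assms(4) by (rule wf_inv_image)
  show "Restr (r - Id) A \<subseteq> inv_image (Restr (s - Id) B) f"
  proof
    fix p assume "p \<in> Restr (r - Id) A"
    then obtain a b where "p = (a, b)" "(a, b) \<in> r" "a \<noteq> b" "a \<in> A" "b \<in> A" by auto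
    then show "p \<in> inv_image (Restr (s - Id) B) f"
      using A assms(3) iso_on_iff[OF f, of a b] iso_on_eq_iff[OF f, of a b] by auto
  qed
qed

lemma wf_diff_Id_iso_on:
  assumes f: "iso_on f r s" and s: "wf (s - Id)" shows "wf (r - Id)"
proof -
  have "Restr (r - Id) (Field r) = r - Id" "Restr (s - Id) (Field s) = s - Id"
    by (auto intro: FieldI1 FieldI2)
  moreover have "f ` Field r \<subseteq> Field s" using iso_on_in_Field[OF f] by blast
  ultimately show ?thesis using wf_Restr_diff_Id_iso_on[OF f subset_refl, of "Field s"] s by simp
qed

lemma is_interval_image:
  assumes f: "iso_on f r s" and J: "is_interval r J"
  shows "is_interval s (f ` J)"
proof -
  have JF: "J \<subseteq> Field r" using J by (simp add: is_interval_def)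
  have "y \<in> f ` J" if xz: "x \<in> J" "z \<in> J" and y: "(f x, y) \<in> s" "(y, f z) \<in> s" for x y z
  proof -
    obtain y' where "y' \<in> Field r" "f y' = y"
      using y(1) iso_on_surj[OF f] by (meson FieldI2)
    moreover then have "(x, y') \<in> r" "(y', z) \<in> r" using xz y JF iso_on_iff[OF f] by blast+
    ultimately show ?thesis using J xz unfolding is_interval_def by blast
  qed
  then show ?thesis
    using JF iso_on_in_Field[OF f] unfolding is_interval_def by blast
qed

lemma is_interval_Restr_trans:
  assumes J: "is_interval r J" and S: "is_interval (Restr r J) S"
  shows "is_interval r S"
  unfolding is_interval_def
proof (intro conjI ballI allI impI)
  have "S \<subseteq> Field (Restr r J)" using S unfolding is_interval_def by blast
  then have SJ: "S \<subseteq> J" using Field_Restr_subset by (rule order_trans)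
  then show "S \<subseteq> Field r" using J unfolding is_interval_def by blast
  fix x z y assume xz: "x \<in> S" "z \<in> S" and y: "(x, y) \<in> r \<and> (y, z) \<in> r"
  then have "y \<in> J" using J SJ unfolding is_interval_def by blast
  then have "(x, y) \<in> Restr r J \<and> (y, z) \<in> Restr r J" using y xz SJ by blast
  then show "y \<in> S" using S xz unfolding is_interval_def by blast
qed

lemma ofilter_image:
  assumes f: "iso_on f r s" and A: "ofilter r A"
  shows "ofilter s (f ` A)"
proof -
  have AF: "A \<subseteq> Field r" using A by (simp add: ofilter_def)
  have "y' \<in> f ` A" if x: "x \<in> A" and y': "(y', f x) \<in> s" for x y'
  proof -
    obtain x' where "x' \<in> Field r" "f x' = y'"
      using y' iso_on_surj[OF f] by (meson FieldI1)
    moreover then have "(x', x) \<in> r" using y' x AF iso_on_iff[OF f] by blast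
    ultimately show ?thesis using A x unfolding ofilter_def under_def by blast
  qed
  then show ?thesis
    using AF iso_on_in_Field[OF f] unfolding ofilter_def under_def by blast
qed

lemma omega_times_iff [simp]:
  "((k, n), (k', n')) \<in> omega_times m \<longleftrightarrow> k < m \<and> k' < m \<and> (k < k' \<or> (k = k' \<and> n \<le> n'))"
  by (simp add: omega_times_def)

lemma Field_omega_times: "Field (omega_times m) = {\<alpha>. fst \<alpha> < m}"
proof
  show "Field (omega_times m) \<subseteq> {\<alpha>. fst \<alpha> < m}" by (auto simp: Field_def omega_times_def)
  show "{\<alpha>. fst \<alpha> < m} \<subseteq> Field (omega_times m)"
  proof
    fix \<alpha> :: "nat \<times> nat" assume "\<alpha> \<in> {\<alpha>. fst \<alpha> < m}"
    then have "(\<alpha>, \<alpha>) \<in> omega_times m" by (cases \<alpha>) simp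
    then show "\<alpha> \<in> Field (omega_times m)" by (rule FieldI1)
  qed
qed

lemma Linear_order_omega_times: "Linear_order (omega_times m)"
  unfolding order_on_defs refl_on_def trans_def antisym_def total_on_def Field_omega_times
  by (auto simp: omega_times_def)

lemma wf_omega_times_diff_Id: "wf (omega_times m - Id)"
proof (rule wf_subset)
  show "wf (less_than <*lex*> less_than)" by blast
  show "omega_times m - Id \<subseteq> less_than <*lex*> less_than" by (auto simp: omega_times_def)
qed

lemma wf_Restr_diff_Id_of_ord_iso_omega_times:
  assumes "ord_iso (omega_times m) (Restr r J)" shows "wf (Restr (r - Id) J)"
proof -
  obtain f where "iso_on f (Restr r J) (omega_times m)"
    using ord_iso_sym[OF assms] unfolding ord_iso_iff_iso_on by blast
  then have "wf (Restr r J - Id)" using wf_diff_Id_iso_on wf_omega_times_diff_Id by blast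
  moreover have "Restr r J - Id = Restr (r - Id) J" by blast
  ultimately show ?thesis by simp
qed

lemma omega_times_mono: "n \<le> m \<Longrightarrow> omega_times n \<subseteq> omega_times m"
  by (auto simp: omega_times_def)

lemma Restr_omega_times: "j \<le> m \<Longrightarrow> Restr (omega_times m) {\<alpha>. fst \<alpha> < j} = omega_times j"
  by (auto simp: omega_times_def)

text \<open>An order-preserving injection of a well-order into itself is inflationary; the point
  \<open>(n, 0)\<close> of \<open>\<omega>\<cdot>m\<close> has to be mapped below itself.\<close>
lemma omega_times_no_embedding:
  assumes nm: "n < m"
    and into: "\<forall>\<alpha>\<in>Field (omega_times m). \<phi> \<alpha> \<in> Field (omega_times n)"
    and inj: "inj_on \<phi> (Field (omega_times m))"
    and mono: "\<forall>\<alpha>\<in>Field (omega_times m). \<forall>\<beta>\<in>Field (omega_times m).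
                 (\<alpha>, \<beta>) \<in> omega_times m \<longrightarrow> (\<phi> \<alpha>, \<phi> \<beta>) \<in> omega_times n"
  shows False
proof -
  let ?F = "Field (omega_times m)" and ?R = "omega_times m - Id"
  have into_m: "\<phi> \<alpha> \<in> ?F" if "\<alpha> \<in> ?F" for \<alpha>
  proof -
    have "\<phi> \<alpha> \<in> Field (omega_times n)" using into that by blast
    then show ?thesis using nm unfolding Field_omega_times by simp
  qed
  have strict: "(\<phi> \<alpha>, \<phi> \<beta>) \<in> ?R" if "\<alpha> \<in> ?F" "\<beta> \<in> ?F" "(\<alpha>, \<beta>) \<in> ?R" for \<alpha> \<beta>
  proof -
    have "(\<phi> \<alpha>, \<phi> \<beta>) \<in> omega_times n" "\<phi> \<alpha> \<noteq> \<phi> \<beta>"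
      using that mono inj unfolding inj_on_def by blast+
    then show ?thesis using omega_times_mono[of n m] nm by auto
  qed
  have not_below: "\<alpha> \<in> ?F \<longrightarrow> (\<phi> \<alpha>, \<alpha>) \<notin> ?R" for \<alpha>
  proof (induction \<alpha> rule: wf_induct_rule[OF wf_omega_times_diff_Id[of m]])
    case (1 \<alpha>)
    show ?case
    proof (intro impI notI)
      assume "\<alpha> \<in> ?F" "(\<phi> \<alpha>, \<alpha>) \<in> ?R"
      then show False using 1 strict[of "\<phi> \<alpha>" \<alpha>] into_m by blast
    qed
  qed
  have "(n, 0) \<in> ?F" using nm by (simp add: Field_omega_times)
  moreover have "fst (\<phi> (n, 0)) < n" using into calculation unfolding Field_omega_times by blast
  then have "(\<phi> (n, 0), (n, 0)) \<in> ?R" using nm by (cases "\<phi> (n, 0)") auto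
  ultimately show False using not_below by blast
qed

lemma osum_LL[simp]: "(Inl a, Inl b) \<in> osum r s \<longleftrightarrow> (a, b) \<in> r" by (simp add: osum_def)
lemma osum_RR[simp]: "(Inr a, Inr b) \<in> osum r s \<longleftrightarrow> (a, b) \<in> s" by (simp add: osum_def)
lemma osum_LR[simp]: "(Inl a, Inr b) \<in> osum r s \<longleftrightarrow> a \<in> Field r \<and> b \<in> Field s" by (simp add: osum_def)
lemma osum_RL[simp]: "(Inr a, Inl b) \<notin> osum r s" by (simp add: osum_def)

lemma Field_osum_L[simp]: "Inl a \<in> Field (osum r s) \<longleftrightarrow> a \<in> Field r"
proof
  assume "Inl a \<in> Field (osum r s)"
  then obtain z where z: "(Inl a, z) \<in> osum r s \<or> (z, Inl a) \<in> osum r s" unfolding Field_def by blast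
  show "a \<in> Field r"
  proof (cases z)
    case (Inl b) then show ?thesis using z by (simp add: Field_def) blast
  next
    case (Inr b) then show ?thesis using z by simp
  qed
next
  assume "a \<in> Field r"
  then obtain a' where "(a, a') \<in> r \<or> (a', a) \<in> r" unfolding Field_def by blast
  then have "(Inl a, Inl a') \<in> osum r s \<or> (Inl a', Inl a) \<in> osum r s" by simp
  then show "Inl a \<in> Field (osum r s)" unfolding Field_def by blast
qed

lemma Field_osum_R[simp]: "Inr a \<in> Field (osum r s) \<longleftrightarrow> a \<in> Field s"
proof
  assume "Inr a \<in> Field (osum r s)"
  then obtain z where z: "(Inr a, z) \<in> osum r s \<or> (z, Inr a) \<in> osum r s" unfolding Field_def by blast
  show "a \<in> Field s"
  proof (cases z)
    case (Inr b) then show ?thesis using z by (simp add: Field_def) blast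
  next
    case (Inl b) then show ?thesis using z by simp
  qed
next
  assume "a \<in> Field s"
  then obtain a' where "(a, a') \<in> s \<or> (a', a) \<in> s" unfolding Field_def by blast
  then have "(Inr a, Inr a') \<in> osum r s \<or> (Inr a', Inr a) \<in> osum r s" by simp
  then show "Inr a \<in> Field (osum r s)" unfolding Field_def by blast
qed

lemma Refl_osum:
  assumes "Refl r" "Refl s" shows "Refl (osum r s)"
  unfolding refl_on_def
proof
  fix z assume "z \<in> Field (osum r s)"
  then show "(z, z) \<in> osum r s" using assms by (cases z) (auto simp: refl_on_def)
qed

lemma ord_iso_osum_ofilter:
  fixes L :: "'a rel" and R :: "'b rel"
  assumes lin: "Linear_order L" and A: "ofilter L A" and \<theta>: "iso_on \<theta> R (Restr L A)"
  shows "ord_iso L (osum R (Restr L (Field L - A)))"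
proof -
  let ?S = "Restr L (Field L - A)" and ?\<psi> = "case_sum \<theta> id"
  have AF: "A \<subseteq> Field L" and down: "\<And>a b. a \<in> A \<Longrightarrow> (b, a) \<in> L \<Longrightarrow> b \<in> A"
    using A unfolding ofilter_def under_def by blast+
  have rl: "Refl L" using lin by (rule Linear_order_Refl)
  have FA: "Field (Restr L A) = A" by (rule Refl_Field_Restr2[OF rl AF])
  have FS: "Field ?S = Field L - A" by (rule Refl_Field_Restr2[OF rl]) blast
  have below: "(a, b) \<in> L" if a: "a \<in> A" and b: "b \<in> Field L - A" for a b
  proof -
    have tot: "total_on (Field L) L" using lin unfolding linear_order_on_def by (rule conjunct2)
    have "a \<in> Field L" using a AF by (rule rev_subsetD)
    moreover have "b \<in> Field L" "a \<noteq> b" using a b by auto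
    ultimately have "(a, b) \<in> L \<or> (b, a) \<in> L" using tot unfolding total_on_def by simp
    then show ?thesis using down[OF a] b by blast
  qed
  have \<theta>A: "\<theta> x \<in> A" if "x \<in> Field R" for x using iso_on_in_Field[OF \<theta> that] FA by simp
  have \<theta>F: "\<theta> x \<in> Field L" if "x \<in> Field R" for x using \<theta>A[OF that] AF by (rule rev_subsetD)
  have \<theta>_iff: "(\<theta> x, \<theta> y) \<in> L \<longleftrightarrow> (x, y) \<in> R" if "x \<in> Field R" "y \<in> Field R" for x y
    using iso_on_iff[OF \<theta> that] \<theta>A[OF that(1)] \<theta>A[OF that(2)] by blast
  have \<theta>_eq: "\<theta> x = \<theta> y \<longleftrightarrow> x = y" if "x \<in> Field R" "y \<in> Field R" for x y
    using iso_on_eq_iff[OF \<theta> that] .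
  have "iso_on ?\<psi> (osum R ?S) L"
    unfolding iso_on_def bij_betw_def inj_on_def
  proof (intro conjI ballI impI equalityI subsetI)
    fix u v assume u: "u \<in> Field (osum R ?S)" and v: "v \<in> Field (osum R ?S)"
    show "(u, v) \<in> osum R ?S \<longleftrightarrow> (?\<psi> u, ?\<psi> v) \<in> L"
    proof (cases u; cases v)
      fix x y assume "u = Inl x" "v = Inl y"
      then show ?thesis using u v by (simp add: \<theta>_iff)
    next
      fix x b assume "u = Inl x" "v = Inr b"
      then show ?thesis using u v below \<theta>A FS by simp
    next
      fix b x assume "u = Inr b" "v = Inl x"
      then show ?thesis using u v down \<theta>A FS by auto
    next
      fix a b assume "u = Inr a" "v = Inr b"
      then show ?thesis using u v FS by auto
    qed
    show "?\<psi> u = ?\<psi> v \<Longrightarrow> u = v"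
      using u v \<theta>A \<theta>_eq FS by (cases u; cases v) auto
  next
    fix a assume "a \<in> ?\<psi> ` Field (osum R ?S)"
    then show "a \<in> Field L" using \<theta>F FS by (auto split: sum.splits)
  next
    fix a assume a: "a \<in> Field L"
    show "a \<in> ?\<psi> ` Field (osum R ?S)"
    proof (cases "a \<in> A")
      case True
      then obtain x where "x \<in> Field R" "\<theta> x = a" using iso_on_surj[OF \<theta>] FA by blast
      then show ?thesis by (metis Field_osum_L image_eqI sum.case(1))
    next
      case False
      then have "Inr a \<in> Field (osum R ?S)" using a FS by simp
      then show ?thesis by (metis image_eqI id_apply sum.case(2))
    qed
  qed
  then show ?thesis using ord_iso_sym ord_iso_iff_iso_on by blast
qed

lemma osum_Inr_interval:
  fixes K :: "'b rel" and X :: "'c rel"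
  assumes "Refl r" and Krefl: "Refl K"
    and S: "is_interval (osum r K) S" and SR: "S \<subseteq> Inr ` Field K"
    and iso: "ord_iso X (Restr (osum r K) S)"
  shows "\<exists>SK. is_interval K SK \<and> ord_iso X (Restr K SK)"
proof -
  let ?M = "osum r K"
  define SK where "SK = {k. Inr k \<in> S}"
  have SKF: "SK \<subseteq> Field K" using SR unfolding SK_def by auto
  have MR: "Refl ?M" using Refl_osum assms(1,2) .
  have SF: "S \<subseteq> Field ?M" using S unfolding is_interval_def by blast
  have FS: "Field (Restr ?M S) = S" using Refl_Field_Restr2[OF MR SF] .
  have FSK: "Field (Restr K SK) = SK" using Refl_Field_Restr2[OF Krefl SKF] .
  have S_eq: "S = Inr ` SK" using SR unfolding SK_def by auto
  have "iso_on Inr (Restr K SK) (Restr ?M S)"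
    unfolding iso_on_def FS FSK bij_betw_def
  proof (intro conjI ballI)
    show "inj_on Inr SK" by (rule inj_onI) simp
    show "Inr ` SK = S" using S_eq ..
    fix a b assume "a \<in> SK" "b \<in> SK"
    then show "((a, b) \<in> Restr K SK) = ((Inr a, Inr b) \<in> Restr ?M S)" unfolding SK_def by simp
  qed
  then have 1: "ord_iso X (Restr K SK)" using iso ord_iso_trans ord_iso_sym unfolding ord_iso_iff_iso_on by metis
  have 2: "is_interval K SK"
    unfolding is_interval_def
  proof (intro conjI SKF ballI allI impI)
    fix x z y assume xz: "x \<in> SK" "z \<in> SK" and y: "(x, y) \<in> K \<and> (y, z) \<in> K"
    then have "(Inr x, Inr y) \<in> ?M \<and> (Inr y, Inr z) \<in> ?M" by simp
    moreover have "Inr x \<in> S" "Inr z \<in> S" using xz unfolding SK_def by auto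
    ultimately have "Inr y \<in> S" using S unfolding is_interval_def by blast
    then show "y \<in> SK" unfolding SK_def by simp
  qed
  show ?thesis using 1 2 by blast
qed

section \<open>Beginnings of intervals of type \<open>\<omega>\<cdot>i\<close>\<close>

definition starts_omega_interval :: "nat \<Rightarrow> 'a rel \<Rightarrow> 'a \<Rightarrow> bool" where
  "starts_omega_interval i r s \<longleftrightarrow>
     (\<exists>J. is_interval r J \<and> s \<in> J \<and> (\<forall>t\<in>J. (s, t) \<in> r) \<and> ord_iso (omega_times i) (Restr r J))"

lemma starts_omega_interval_in_Field: "starts_omega_interval i r s \<Longrightarrow> s \<in> Field r"
  unfolding starts_omega_interval_def is_interval_def by blast

lemma starts_omega_interval_iso_on:
  assumes F: "iso_on F r r'" and rr: "Refl r" and rr': "Refl r'"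
    and st: "starts_omega_interval i r s"
  shows "starts_omega_interval i r' (F s)"
proof -
  obtain J where J: "is_interval r J" "s \<in> J" "\<forall>t\<in>J. (s, t) \<in> r" "ord_iso (omega_times i) (Restr r J)"
    using st unfolding starts_omega_interval_def by blast
  have JF: "J \<subseteq> Field r" using J(1) unfolding is_interval_def by blast
  have 1: "is_interval r' (F ` J)" using is_interval_image[OF F J(1)] .
  have 2: "F s \<in> F ` J" using J(2) by blast
  have 3: "\<forall>t'\<in>F ` J. (F s, t') \<in> r'"
  proof
    fix t' assume "t' \<in> F ` J"
    then obtain t where t: "t \<in> J" "t' = F t" by blast
    then have "(s, t) \<in> r" using J(3) by blast
    then show "(F s, t') \<in> r'" using iso_on_iff[OF F, of s t] t J(2) JF by blast
  qed
  have "ord_iso (Restr r J) (Restr r' (F ` J))" using ord_iso_Restr_image[OF F rr rr' JF] .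
  then have 4: "ord_iso (omega_times i) (Restr r' (F ` J))" using J(4) ord_iso_trans by blast
  show ?thesis unfolding starts_omega_interval_def using 1 2 3 4 by blast
qed

lemma starts_omega_interval_Restr:
  assumes B: "is_interval r B" and st: "starts_omega_interval i (Restr r B) s"
  shows "starts_omega_interval i r s"
proof -
  obtain J where J: "is_interval (Restr r B) J" "s \<in> J" "\<forall>t\<in>J. (s, t) \<in> Restr r B"
    "ord_iso (omega_times i) (Restr (Restr r B) J)"
    using st unfolding starts_omega_interval_def by blast
  have "J \<subseteq> Field (Restr r B)" using J(1) unfolding is_interval_def by blast
  then have "J \<subseteq> B" using Field_Restr_subset by (rule order_trans)
  then have "Restr (Restr r B) J = Restr r J" by blast
  then show ?thesis
    using is_interval_Restr_trans[OF B J(1)] J(2-4) unfolding starts_omega_interval_def by auto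
qed

lemma starts_omega_interval_omega_times:
  assumes "1 \<le> j" "j \<le> m"
  shows "starts_omega_interval j (omega_times m) (0, 0)"
  unfolding starts_omega_interval_def
proof (intro exI conjI ballI)
  let ?J = "{\<alpha>. fst \<alpha> < j}"
  show "is_interval (omega_times m) ?J"
    using assms(2) unfolding is_interval_def Field_omega_times by (auto simp: omega_times_def)
  show "(0, 0) \<in> ?J" using assms(1) by simp
  show "((0, 0), t) \<in> omega_times m" if "t \<in> ?J" for t
    using that assms by (cases t) auto
  show "ord_iso (omega_times j) (Restr (omega_times m) ?J)"
    using Restr_omega_times[OF assms(2)] ord_iso_refl by metis
qed

lemma is_interval_osum_Inl: "is_interval (osum r s) (Inl ` Field r)"
  unfolding is_interval_def
proof (intro conjI ballI allI impI)
  show "Inl ` Field r \<subseteq> Field (osum r s)" by auto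
  fix x z y assume x: "x \<in> Inl ` Field r" and "z \<in> Inl ` Field r"
    and y: "(x, y) \<in> osum r s \<and> (y, z) \<in> osum r s"
  then obtain b where b: "y = Inl b" by (cases y) auto
  obtain a where "x = Inl a" using x by blast
  then have "(a, b) \<in> r" using y b by simp
  then show "y \<in> Inl ` Field r" using b by (blast intro: FieldI2)
qed

lemma iso_on_Inl_osum:
  assumes "Refl r" "Refl s" shows "iso_on Inl r (Restr (osum r s) (Inl ` Field r))"
proof -
  have "Field (Restr (osum r s) (Inl ` Field r)) = Inl ` Field r"
    by (rule Refl_Field_Restr2[OF Refl_osum[OF assms]]) auto
  then show ?thesis unfolding iso_on_def by (auto simp: bij_betw_def inj_on_def)
qed

lemma starts_omega_interval_osum_Inl:
  assumes r: "Refl r" and s: "Refl s" and st: "starts_omega_interval i r a"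
  shows "starts_omega_interval i (osum r s) (Inl a)"
proof -
  have "starts_omega_interval i (Restr (osum r s) (Inl ` Field r)) (Inl a)"
    using starts_omega_interval_iso_on[OF iso_on_Inl_osum[OF r s] r Refl_Restr[OF Refl_osum[OF r s]] st] .
  then show ?thesis using starts_omega_interval_Restr[OF is_interval_osum_Inl] by blast
qed

definition same_block :: "nat \<Rightarrow> 'a rel \<Rightarrow> 'a \<Rightarrow> 'a \<Rightarrow> bool" where
  "same_block i r u v \<longleftrightarrow> wf (Restr (r - Id)
     {s. starts_omega_interval i r s \<and> ((u, s) \<in> r \<and> (s, v) \<in> r \<or> (v, s) \<in> r \<and> (s, u) \<in> r)})"

lemma same_block_of_iso_on:
  assumes F: "iso_on F r r'" and rr: "Refl r" and rr': "Refl r'" and u: "u \<in> Field r" and v: "v \<in> Field r"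
    and same: "same_block i r' (F u) (F v)"
  shows "same_block i r u v"
  unfolding same_block_def
proof (rule wf_Restr_diff_Id_iso_on[OF F])
  let ?A = "{s. starts_omega_interval i r s \<and> ((u, s) \<in> r \<and> (s, v) \<in> r \<or> (v, s) \<in> r \<and> (s, u) \<in> r)}"
  show "?A \<subseteq> Field r" using starts_omega_interval_in_Field[of i r] by blast
  show "F ` ?A \<subseteq> {s. starts_omega_interval i r' s \<and>
      ((F u, s) \<in> r' \<and> (s, F v) \<in> r' \<or> (F v, s) \<in> r' \<and> (s, F u) \<in> r')}"
  proof (intro image_subsetI CollectI conjI)
    fix s assume s: "s \<in> ?A"
    then have "s \<in> Field r" using starts_omega_interval_in_Field[of i r s] by blast
    then show "(F u, F s) \<in> r' \<and> (F s, F v) \<in> r' \<or> (F v, F s) \<in> r' \<and> (F s, F u) \<in> r'"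
      using s u v iso_on_iff[OF F] by blast
    show "starts_omega_interval i r' (F s)" using s starts_omega_interval_iso_on[OF F rr rr'] by blast
  qed
  show "wf (Restr (r' - Id) {s. starts_omega_interval i r' s \<and>
      ((F u, s) \<in> r' \<and> (s, F v) \<in> r' \<or> (F v, s) \<in> r' \<and> (s, F u) \<in> r')})"
    using same unfolding same_block_def .
qed

lemma image_same_block_class:
  assumes F: "iso_on F r r'" and rr: "Refl r" and rr': "Refl r'" and u: "u \<in> Field r"
  shows "F ` {v \<in> Field r. same_block i r u v} = {w \<in> Field r'. same_block i r' (F u) w}"
proof
  let ?G = "inv_into (Field r) F"
  have G: "iso_on ?G r' r" using iso_on_inv_into[OF F] .
  have GF: "?G (F v) = v" if "v \<in> Field r" for v
    using F that unfolding iso_on_def bij_betw_def by (simp add: inv_into_f_f)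
  show "F ` {v \<in> Field r. same_block i r u v} \<subseteq> {w \<in> Field r'. same_block i r' (F u) w}"
  proof (intro image_subsetI CollectI conjI)
    fix v assume v: "v \<in> {v \<in> Field r. same_block i r u v}"
    then show "F v \<in> Field r'" using iso_on_in_Field[OF F] by blast
    show "same_block i r' (F u) (F v)"
      using same_block_of_iso_on[OF G rr' rr iso_on_in_Field[OF F u] \<open>F v \<in> Field r'\<close>] v u GF by simp
  qed
  show "{w \<in> Field r'. same_block i r' (F u) w} \<subseteq> F ` {v \<in> Field r. same_block i r u v}"
  proof
    fix w assume w: "w \<in> {w \<in> Field r'. same_block i r' (F u) w}"
    then obtain v where "v \<in> Field r" "F v = w" using iso_on_surj[OF F] by blast
    then show "w \<in> F ` {v \<in> Field r. same_block i r u v}"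
      using same_block_of_iso_on[OF F rr rr' u] w by blast
  qed
qed

section \<open>Orders of the form \<open>\<omega>\<cdot>i + K\<close>\<close>

lemma starts_omega_interval_osum_in_range_Inl:
  fixes K :: "'b rel"
  assumes Klin: "Linear_order K"
    and Kg: "\<not> (\<exists>J. is_interval K J \<and> ord_iso (omega_times i) (Restr K J))"
    and st: "starts_omega_interval i (osum (omega_times i) K) s"
  shows "s \<in> range Inl"
proof (rule ccontr)
  let ?M = "osum (omega_times i) K"
  assume "s \<notin> range Inl"
  then obtain k where k: "s = Inr k" by (cases s) auto
  obtain J where J: "is_interval ?M J" "s \<in> J" "\<forall>t\<in>J. (s, t) \<in> ?M" "ord_iso (omega_times i) (Restr ?M J)"
    using st unfolding starts_omega_interval_def by blast
  have "t \<in> Inr ` Field K" if "t \<in> J" for t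
  proof -
    have "(Inr k, t) \<in> ?M" using J(3) that k by blast
    then show ?thesis by (cases t) (auto intro: FieldI2)
  qed
  then have "J \<subseteq> Inr ` Field K" by blast
  then show False
    using osum_Inr_interval[OF Linear_order_Refl[OF Linear_order_omega_times] Linear_order_Refl[OF Klin] J(1) _ J(4)] Kg
    by blast
qed

lemma wf_starts_omega_interval_osum:
  fixes K :: "'b rel"
  assumes Klin: "Linear_order K"
    and Kg: "\<not> (\<exists>J. is_interval K J \<and> ord_iso (omega_times i) (Restr K J))"
  shows "wf (Restr (osum (omega_times i) K - Id) {s. starts_omega_interval i (osum (omega_times i) K) s})"
proof (rule wf_subset)
  let ?M = "osum (omega_times i) K"
  show "wf (inv_image (omega_times i - Id) projl)" using wf_omega_times_diff_Id by (rule wf_inv_image)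
  show "Restr (?M - Id) {s. starts_omega_interval i ?M s} \<subseteq> inv_image (omega_times i - Id) projl"
  proof
    fix p assume p: "p \<in> Restr (?M - Id) {s. starts_omega_interval i ?M s}"
    then obtain u v where uv: "p = (u, v)" "(u, v) \<in> ?M" "u \<noteq> v"
      "starts_omega_interval i ?M u" "starts_omega_interval i ?M v" by auto
    then obtain a b where "u = Inl a" "v = Inl b"
      using starts_omega_interval_osum_in_range_Inl[OF Klin Kg] by blast
    then show "p \<in> inv_image (omega_times i - Id) projl" using uv by simp
  qed
qed

lemma good_form_obtain_iso:
  fixes L :: "'a rel"
  assumes "good_form i L"
  obtains K :: "'a rel" and g where "Linear_order K" "iso_on g L (osum (omega_times i) K)"
    "\<not> (\<exists>J. is_interval K J \<and> ord_iso (omega_times i) (Restr K J))"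
  using assms unfolding good_form_def ord_iso_iff_iso_on by blast

lemma good_form_wf_starts_omega_interval:
  fixes L :: "'a rel"
  assumes lin: "Linear_order L" and gf: "good_form i L"
  shows "wf (Restr (L - Id) {a. starts_omega_interval i L a})"
proof -
  obtain K :: "'a rel" and g where K: "Linear_order K" and g: "iso_on g L (osum (omega_times i) K)"
    and Kg: "\<not> (\<exists>J. is_interval K J \<and> ord_iso (omega_times i) (Restr K J))"
    using good_form_obtain_iso[OF gf] by blast
  have M: "Refl (osum (omega_times i) K)"
    by (rule Refl_osum[OF Linear_order_Refl[OF Linear_order_omega_times] Linear_order_Refl[OF K]])
  show ?thesis
  proof (rule wf_Restr_diff_Id_iso_on[OF g _ _ wf_starts_omega_interval_osum[OF K Kg]])
    show "{a. starts_omega_interval i L a} \<subseteq> Field L" using starts_omega_interval_in_Field[of i L] by blast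
    show "g ` {a. starts_omega_interval i L a} \<subseteq> {s. starts_omega_interval i (osum (omega_times i) K) s}"
      using starts_omega_interval_iso_on[OF g Linear_order_Refl[OF lin] M] by blast
  qed
qed

lemma good_form_starts_omega_interval:
  fixes L :: "'a rel"
  assumes i: "1 \<le> i" and lin: "Linear_order L" and gf: "good_form i L"
  obtains a where "starts_omega_interval i L a"
proof -
  obtain K :: "'a rel" and g where K: "Linear_order K" and g: "iso_on g L (osum (omega_times i) K)"
    using good_form_obtain_iso[OF gf] by blast
  have "starts_omega_interval i (osum (omega_times i) K) (Inl (0, 0))"
    by (rule starts_omega_interval_osum_Inl[OF Linear_order_Refl[OF Linear_order_omega_times]
          Linear_order_Refl[OF K] starts_omega_interval_omega_times[OF i order_refl]])
  moreover have "Refl (osum (omega_times i) K)"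
    by (rule Refl_osum[OF Linear_order_Refl[OF Linear_order_omega_times] Linear_order_Refl[OF K]])
  ultimately show thesis
    using starts_omega_interval_iso_on[OF iso_on_inv_into[OF g] _ Linear_order_Refl[OF lin]] that by blast
qed

lemma iso_on_omega_times_Suc_osum:
  fixes K :: "'b rel" and t :: "nat \<Rightarrow> 'b"
  assumes K: "Refl K" and t: "\<And>m. t m \<in> Field K" and t_mono: "\<And>m m'. (t m, t m') \<in> K \<longleftrightarrow> m \<le> m'"
  shows "iso_on (\<lambda>\<alpha>. if fst \<alpha> < i then Inl \<alpha> else Inr (t (snd \<alpha>))) (omega_times (Suc i))
    (Restr (osum (omega_times i) K) (Inl ` Field (omega_times i) \<union> Inr ` range t))"
proof -
  let ?\<psi> = "\<lambda>\<alpha>. if fst \<alpha> < i then Inl \<alpha> else Inr (t (snd \<alpha>))"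
  let ?M = "osum (omega_times i) K" and ?A = "Inl ` Field (omega_times i) \<union> Inr ` range t"
  have "?A \<subseteq> Field ?M" using t by auto
  then have FA: "Field (Restr ?M ?A) = ?A"
    by (rule Refl_Field_Restr2[OF Refl_osum[OF Linear_order_Refl[OF Linear_order_omega_times] K]])
  have t_inj: "t m = t m' \<longleftrightarrow> m = m'" for m m' using t_mono[of m m'] t_mono[of m' m] by auto
  have "bij_betw ?\<psi> (Field (omega_times (Suc i))) ?A"
    unfolding bij_betw_def inj_on_def
  proof (intro conjI ballI impI)
    fix \<alpha> \<beta> assume "\<alpha> \<in> Field (omega_times (Suc i))" "\<beta> \<in> Field (omega_times (Suc i))" "?\<psi> \<alpha> = ?\<psi> \<beta>"
    then show "\<alpha> = \<beta>" unfolding Field_omega_times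
      by (cases \<alpha>; cases \<beta>) (auto simp: t_inj split: if_splits)
  next
    show "?\<psi> ` Field (omega_times (Suc i)) = ?A"
    proof
      show "?\<psi> ` Field (omega_times (Suc i)) \<subseteq> ?A" unfolding Field_omega_times by auto
      show "?A \<subseteq> ?\<psi> ` Field (omega_times (Suc i))"
      proof
        fix p assume "p \<in> ?A"
        then consider \<alpha> where "fst \<alpha> < i" "p = Inl \<alpha>" | m where "p = Inr (t m)"
          unfolding Field_omega_times by blast
        then show "p \<in> ?\<psi> ` Field (omega_times (Suc i))"
        proof cases
          case 1 then show ?thesis unfolding Field_omega_times by force
        next
          case (2 m)
          then have "p = ?\<psi> (i, m)" by simp
          moreover have "(i, m) \<in> Field (omega_times (Suc i))" by (simp add: Field_omega_times)
          ultimately show ?thesis by blast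
        qed
      qed
    qed
  qed
  moreover have "(\<alpha>, \<beta>) \<in> omega_times (Suc i) \<longleftrightarrow> (?\<psi> \<alpha>, ?\<psi> \<beta>) \<in> Restr ?M ?A"
    if "\<alpha> \<in> Field (omega_times (Suc i))" "\<beta> \<in> Field (omega_times (Suc i))" for \<alpha> \<beta>
    using that t unfolding Field_omega_times
    by (cases \<alpha>; cases \<beta>) (auto simp: t_mono Field_omega_times)
  ultimately show ?thesis unfolding iso_on_def FA by blast
qed

lemma iso_on_omega_times_Suc_osum_meets_Inr:
  fixes K :: "'b rel"
  assumes H: "iso_on H (omega_times (Suc i)) (Restr (osum (omega_times i) K) J)"
  shows "\<exists>\<alpha>\<in>Field (omega_times (Suc i)). H \<alpha> \<in> range Inr"
proof (rule ccontr)
  let ?M = "osum (omega_times i) K" and ?W = "omega_times (Suc i)"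
  assume "\<not> ?thesis"
  then have H_Inl: "H \<alpha> = Inl (projl (H \<alpha>))" if "\<alpha> \<in> Field ?W" for \<alpha>
    using that by (cases "H \<alpha>") auto
  have HF: "H \<alpha> \<in> Field ?M" if "\<alpha> \<in> Field ?W" for \<alpha>
    using iso_on_in_Field[OF H that] mono_Field[OF Int_lower1] by (rule subsetD[rotated])
  show False
  proof (rule omega_times_no_embedding[of i "Suc i" "projl \<circ> H"])
    show "\<forall>\<alpha>\<in>Field ?W. (projl \<circ> H) \<alpha> \<in> Field (omega_times i)"
      using HF H_Inl by (metis Field_osum_L comp_apply)
    show "inj_on (projl \<circ> H) (Field ?W)"
      using H_Inl iso_on_eq_iff[OF H] unfolding inj_on_def by (metis comp_apply)
    show "\<forall>\<alpha>\<in>Field ?W. \<forall>\<beta>\<in>Field ?W. (\<alpha>, \<beta>) \<in> ?W \<longrightarrow> ((projl \<circ> H) \<alpha>, (projl \<circ> H) \<beta>) \<in> omega_times i"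
      using H_Inl iso_on_iff[OF H] by (metis IntD1 comp_apply osum_LL)
  qed simp
qed

lemma iso_on_omega_times_Suc_osum_start_Inl:
  fixes K :: "'b rel"
  assumes Klin: "Linear_order K"
    and Kg: "\<not> (\<exists>J. is_interval K J \<and> ord_iso (omega_times i) (Restr K J))"
    and i1: "1 \<le> i" and J: "is_interval (osum (omega_times i) K) J"
    and H: "iso_on H (omega_times (Suc i)) (Restr (osum (omega_times i) K) J)"
  shows "H (0, 0) \<in> range Inl"
proof -
  let ?M = "osum (omega_times i) K"
  have "Refl ?M" by (rule Refl_osum[OF Linear_order_Refl[OF Linear_order_omega_times] Linear_order_Refl[OF Klin]])
  then have "starts_omega_interval i (Restr ?M J) (H (0, 0))"
    using starts_omega_interval_iso_on[OF H Linear_order_Refl[OF Linear_order_omega_times] Refl_Restr]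
      starts_omega_interval_omega_times[OF i1] by simp
  then show ?thesis
    using starts_omega_interval_Restr[OF J] starts_omega_interval_osum_in_range_Inl[OF Klin Kg] by blast
qed

text \<open>The interval starts inside \<open>\<omega>\<cdot>i\<close> and reaches into \<open>K\<close>; its first \<open>\<omega>\<close>-block inside \<open>K\<close>
  is an initial segment of \<open>K\<close>, and together with \<open>\<omega>\<cdot>i\<close> it forms an initial segment of type
  \<open>\<omega>\<cdot>(i+1)\<close>.\<close>
lemma osum_interval_omega_times_Suc_ofilter:
  fixes K :: "'b rel"
  assumes Klin: "Linear_order K"
    and Kg: "\<not> (\<exists>J. is_interval K J \<and> ord_iso (omega_times i) (Restr K J))"
    and i1: "1 \<le> i" and J: "is_interval (osum (omega_times i) K) J"
    and H: "iso_on H (omega_times (Suc i)) (Restr (osum (omega_times i) K) J)"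
  shows "\<exists>A. ofilter (osum (omega_times i) K) A \<and> ord_iso (omega_times (Suc i)) (Restr (osum (omega_times i) K) A)"
proof -
  let ?M = "osum (omega_times i) K" and ?W = "omega_times (Suc i)"
  have MR: "Refl ?M" by (rule Refl_osum[OF Linear_order_Refl[OF Linear_order_omega_times] Linear_order_Refl[OF Klin]])
  have JF: "J \<subseteq> Field ?M" using J unfolding is_interval_def by blast
  have FJ: "Field (Restr ?M J) = J" by (rule Refl_Field_Restr2[OF MR JF])
  have HJ: "H \<alpha> \<in> J" if "\<alpha> \<in> Field ?W" for \<alpha> using iso_on_in_Field[OF H that] FJ by simp
  have HF: "H \<alpha> \<in> Field ?M" if "\<alpha> \<in> Field ?W" for \<alpha> using HJ[OF that] JF by blast
  have H_iff: "(H \<alpha>, H \<beta>) \<in> ?M \<longleftrightarrow> (\<alpha>, \<beta>) \<in> ?W" if "\<alpha> \<in> Field ?W" "\<beta> \<in> Field ?W" for \<alpha> \<beta>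
    using iso_on_iff[OF H that] HJ that by blast
  have H_surj: "\<exists>\<alpha>\<in>Field ?W. H \<alpha> = p" if "p \<in> J" for p using iso_on_surj[OF H] that FJ by simp
  obtain a0 where a0: "H (0, 0) = Inl a0"
    using iso_on_omega_times_Suc_osum_start_Inl[OF Klin Kg i1 J H] by blast
  define Q where "Q = {\<alpha> \<in> Field ?W. H \<alpha> \<in> range Inr}"
  obtain \<alpha>1 where "\<alpha>1 \<in> Q" using iso_on_omega_times_Suc_osum_meets_Inr[OF H] unfolding Q_def by blast
  then obtain \<alpha>0 where \<alpha>0: "\<alpha>0 \<in> Q" and \<alpha>0_min: "\<And>\<beta>. (\<beta>, \<alpha>0) \<in> ?W - Id \<Longrightarrow> \<beta> \<notin> Q"
    using wfE_min[OF wf_omega_times_diff_Id] by metis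
  obtain k0 n0 where k0n0: "\<alpha>0 = (k0, n0)" by (cases \<alpha>0)
  have k0: "k0 < Suc i" using \<alpha>0 k0n0 unfolding Q_def Field_omega_times by simp
  define tail where "tail m = (k0, n0 + m)" for m
  have tail_F: "tail m \<in> Field ?W" for m unfolding tail_def Field_omega_times using k0 by simp
  have tail_Inr: "H (tail m) \<in> range Inr" for m
  proof -
    have "(H \<alpha>0, H (tail m)) \<in> ?M"
      using H_iff \<alpha>0 tail_F k0 unfolding Q_def k0n0 tail_def by simp
    then show ?thesis using \<alpha>0 unfolding Q_def by (cases "H (tail m)") auto
  qed
  define t where "t m = projr (H (tail m))" for m
  have Ht: "H (tail m) = Inr (t m)" for m using tail_Inr[of m] unfolding t_def by auto
  have t_F: "t m \<in> Field K" for m using HF[OF tail_F] Ht by (metis Field_osum_R)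
  have t_mono: "(t m, t m') \<in> K \<longleftrightarrow> m \<le> m'" for m m'
    using H_iff[OF tail_F tail_F, of m m'] Ht k0 unfolding tail_def by simp
  define A where "A = Inl ` Field (omega_times i) \<union> Inr ` range t"
  have down: "p' \<in> A" if p: "p \<in> A" and p'p: "(p', p) \<in> ?M" for p p'
  proof (cases p')
    case (Inl x)
    have "Inl x \<in> Field ?M" using p'p Inl by (blast intro: FieldI1)
    then show ?thesis using Inl unfolding A_def by simp
  next
    case (Inr k')
    then obtain m where pm: "p = H (tail m)" using p p'p Ht unfolding A_def by auto
    have "Inl a0 \<in> Field ?M" using HF[of "(0, 0)"] a0 by (simp add: Field_omega_times)
    moreover have "Inr k' \<in> Field ?M" using p'p Inr by (blast intro: FieldI1)
    ultimately have "(H (0, 0), p') \<in> ?M" using a0 Inr by simp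
    moreover have "H (0, 0) \<in> J" "p \<in> J"
      using HJ[OF tail_F] HJ[of "(0, 0)"] pm by (simp_all add: Field_omega_times)
    ultimately have "p' \<in> J" using J p'p unfolding is_interval_def by blast
    then obtain \<beta> where \<beta>: "\<beta> \<in> Field ?W" "H \<beta> = p'" using H_surj by blast
    then have "(\<beta>, \<alpha>0) \<notin> ?W - Id" using \<alpha>0_min Inr unfolding Q_def by blast
    moreover have "(\<beta>, tail m) \<in> ?W" using H_iff[OF \<beta>(1) tail_F] \<beta>(2) pm p'p by simp
    ultimately have "fst \<beta> = k0" "n0 \<le> snd \<beta>"
      using \<beta>(1) k0n0 unfolding tail_def Field_omega_times by (cases \<beta>; auto)+
    then have "\<beta> = tail (snd \<beta> - n0)" unfolding tail_def by (cases \<beta>) auto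
    then show ?thesis using \<beta>(2) Ht unfolding A_def by (metis rangeI UnI2 image_eqI)
  qed
  have "A \<subseteq> Field ?M" using t_F unfolding A_def by auto
  then have "ofilter ?M A" using down unfolding ofilter_def under_def by blast
  moreover have "iso_on (\<lambda>\<alpha>. if fst \<alpha> < i then Inl \<alpha> else Inr (t (snd \<alpha>))) ?W (Restr ?M A)"
    unfolding A_def by (rule iso_on_omega_times_Suc_osum[OF Linear_order_Refl[OF Klin] t_F t_mono])
  ultimately show ?thesis unfolding ord_iso_iff_iso_on by blast
qed

lemma good_form_interval_omega_times_Suc:
  fixes L :: "'a rel"
  assumes i1: "1 \<le> i" and lin: "Linear_order L" and gf: "good_form i L"
    and J: "is_interval L J" and iso: "ord_iso (omega_times (Suc i)) (Restr L J)"
  shows "\<exists>K :: 'a rel. Linear_order K \<and> ord_iso L (osum (omega_times (Suc i)) K)"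
proof -
  obtain K :: "'a rel" and g where K: "Linear_order K" and g: "iso_on g L (osum (omega_times i) K)"
    and Kg: "\<not> (\<exists>J. is_interval K J \<and> ord_iso (omega_times i) (Restr K J))"
    using good_form_obtain_iso[OF gf] by blast
  let ?M = "osum (omega_times i) K" and ?g' = "inv_into (Field L) g"
  have L: "Refl L" using lin by (rule Linear_order_Refl)
  have M: "Refl ?M" by (rule Refl_osum[OF Linear_order_Refl[OF Linear_order_omega_times] Linear_order_Refl[OF K]])
  have "J \<subseteq> Field L" using J unfolding is_interval_def by blast
  then have "ord_iso (omega_times (Suc i)) (Restr ?M (g ` J))"
    using ord_iso_trans[OF iso ord_iso_Restr_image[OF g L M]] by blast
  then obtain H where "iso_on H (omega_times (Suc i)) (Restr ?M (g ` J))"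
    unfolding ord_iso_iff_iso_on by blast
  then obtain A where A: "ofilter ?M A" and A_iso: "ord_iso (omega_times (Suc i)) (Restr ?M A)"
    using osum_interval_omega_times_Suc_ofilter[OF K Kg i1 is_interval_image[OF g J]] by blast
  have "A \<subseteq> Field ?M" using A unfolding ofilter_def by blast
  then have "ord_iso (omega_times (Suc i)) (Restr L (?g' ` A))"
    using ord_iso_trans[OF A_iso ord_iso_Restr_image[OF iso_on_inv_into[OF g] M L]] by blast
  then obtain \<theta> where "iso_on \<theta> (omega_times (Suc i)) (Restr L (?g' ` A))"
    unfolding ord_iso_iff_iso_on by blast
  then have "ord_iso L (osum (omega_times (Suc i)) (Restr L (Field L - ?g' ` A)))"
    using ord_iso_osum_ofilter[OF lin ofilter_image[OF iso_on_inv_into[OF g] A]] by blast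
  then show ?thesis using Linear_order_Restr[OF lin] by blast
qed

lemma shuf_col_iff [simp]:
  "((x, a), (y, b)) \<in> shuf_col c L \<longleftrightarrow>
     a \<in> Field (L (c x)) \<and> b \<in> Field (L (c y)) \<and> (x < y \<or> (x = y \<and> (a, b) \<in> L (c x)))"
  by (simp add: shuf_col_def)

lemma Field_shuf_col:
  assumes "\<And>q. Refl (L (c q))"
  shows "p \<in> Field (shuf_col c L) \<longleftrightarrow> snd p \<in> Field (L (c (fst p)))"
proof
  assume "p \<in> Field (shuf_col c L)"
  then obtain p' where "(p, p') \<in> shuf_col c L \<or> (p', p) \<in> shuf_col c L" unfolding Field_def by blast
  then show "snd p \<in> Field (L (c (fst p)))" by (cases p; cases p') auto
next
  assume "snd p \<in> Field (L (c (fst p)))"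
  then have "(p, p) \<in> shuf_col c L" using assms[of "fst p"] unfolding refl_on_def by (cases p) auto
  then show "p \<in> Field (shuf_col c L)" by (rule FieldI1)
qed

lemma Linear_order_shuf_col:
  assumes lin: "\<And>q. Linear_order (L (c q))"
  shows "Linear_order (shuf_col c L)"
proof -
  have refl: "\<And>q. Refl (L (c q))" using lin by (rule Linear_order_Refl)
  have tr: "\<And>q. trans (L (c q))" and an: "\<And>q. antisym (L (c q))"
    and to: "\<And>q. total_on (Field (L (c q))) (L (c q))"
    using lin unfolding order_on_defs by blast+
  have "Refl (shuf_col c L)"
    using refl Field_shuf_col[of L c, OF refl] unfolding refl_on_def by fastforce
  moreover have "trans (shuf_col c L)"
    unfolding trans_def
  proof (intro allI impI)
    fix p1 p2 p3 assume "(p1, p2) \<in> shuf_col c L" "(p2, p3) \<in> shuf_col c L"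
    then show "(p1, p3) \<in> shuf_col c L"
      using transD[OF tr] by (cases p1; cases p2; cases p3) auto
  qed
  moreover have "antisym (shuf_col c L)"
    unfolding antisym_def
  proof (intro allI impI)
    fix p1 p2 assume "(p1, p2) \<in> shuf_col c L" "(p2, p1) \<in> shuf_col c L"
    then show "p1 = p2" using an unfolding antisym_def by (cases p1; cases p2) auto
  qed
  moreover have "total_on (Field (shuf_col c L)) (shuf_col c L)"
    unfolding total_on_def
  proof (intro ballI impI)
    fix p1 p2 assume "p1 \<in> Field (shuf_col c L)" "p2 \<in> Field (shuf_col c L)" "p1 \<noteq> p2"
    then show "(p1, p2) \<in> shuf_col c L \<or> (p2, p1) \<in> shuf_col c L"
      using to Field_shuf_col[of L c, OF refl] unfolding total_on_def
      by (cases p1; cases p2) (auto simp: neq_iff, blast)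
  qed
  ultimately show ?thesis unfolding order_on_defs by (auto intro: FieldI1 FieldI2)
qed

section \<open>Back and forth: equal classes give isomorphic shuffles\<close>

lemma finite_sets_separated:
  fixes A B :: "'a :: {linorder, no_top, no_bot} set"
  assumes fin: "finite A" "finite B" and AB: "\<forall>a\<in>A. \<forall>b\<in>B. a < b"
  shows "\<exists>lo hi. lo < hi \<and> (\<forall>a\<in>A. a \<le> lo) \<and> (\<forall>b\<in>B. hi \<le> b)"
proof (cases "A = {}"; cases "B = {}")
  assume "A = {}" "B = {}"
  then show ?thesis using gt_ex by blast
next
  assume "A = {}" "B \<noteq> {}"
  then show ?thesis using lt_ex[of "Min B"] fin by fastforce
next
  assume "A \<noteq> {}" "B = {}"
  then show ?thesis using gt_ex[of "Max A"] fin by fastforce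
next
  assume "A \<noteq> {}" "B \<noteq> {}"
  then have "Max A < Min B" using AB fin by simp
  then show ?thesis using fin by fastforce
qed

definition colour_matching :: "(rat \<Rightarrow> 'i) \<Rightarrow> (rat \<Rightarrow> 'j) \<Rightarrow> ('i \<Rightarrow> 'j \<Rightarrow> bool) \<Rightarrow> (rat \<times> rat) set \<Rightarrow> bool" where
  "colour_matching c1 c2 R P \<longleftrightarrow> finite P \<and> (\<forall>p\<in>P. \<forall>p'\<in>P. fst p < fst p' \<longleftrightarrow> snd p < snd p') \<and>
     (\<forall>p\<in>P. R (c1 (fst p)) (c2 (snd p)))"

lemma colour_matching_swap:
  "colour_matching c2 c1 (\<lambda>b a. R a b) (prod.swap ` P) \<longleftrightarrow> colour_matching c1 c2 R P"
  unfolding colour_matching_def by (auto simp: finite_image_iff)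

lemma colour_matching_extend_left:
  assumes g: "colour_matching c1 c2 R P" and c1: "dense_coloring I1 c1" and c2: "dense_coloring I2 c2"
    and tot: "\<forall>a\<in>I1. \<exists>b\<in>I2. R a b"
  shows "\<exists>r. colour_matching c1 c2 R (insert (q, r) P)"
proof (cases "\<exists>b. (q, b) \<in> P")
  case True
  then obtain b where "(q, b) \<in> P" by blast
  then have "insert (q, b) P = P" by blast
  then show ?thesis using g by metis
next
  case False
  have fin: "finite P" and mono: "\<forall>p\<in>P. \<forall>p'\<in>P. fst p < fst p' \<longleftrightarrow> snd p < snd p'"
    and comp: "\<forall>p\<in>P. R (c1 (fst p)) (c2 (snd p))" using g unfolding colour_matching_def by blast+
  obtain j where j: "j \<in> I2" "R (c1 q) j" using tot c1 unfolding dense_coloring_def by blast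
  define A where "A = snd ` {p\<in>P. fst p < q}"
  define B where "B = snd ` {p\<in>P. q < fst p}"
  have "finite A" "finite B" using fin unfolding A_def B_def by auto
  moreover have "\<forall>a\<in>A. \<forall>b\<in>B. a < b"
  proof (intro ballI)
    fix a b assume "a \<in> A" "b \<in> B"
    then obtain p p' where "p \<in> P" "fst p < q" "a = snd p" "p' \<in> P" "q < fst p'" "b = snd p'"
      unfolding A_def B_def by blast
    then show "a < b" using mono by (meson less_trans)
  qed
  ultimately obtain lo hi where lh: "lo < hi" "\<forall>a\<in>A. a \<le> lo" "\<forall>b\<in>B. hi \<le> b"
    using finite_sets_separated[of A B] by blast
  obtain z where z: "lo < z" "z < hi" "c2 z = j" using c2 lh(1) j(1) unfolding dense_coloring_def by blast
  have key: "\<forall>p\<in>P. (fst p < q \<longleftrightarrow> snd p < z) \<and> (q < fst p \<longleftrightarrow> z < snd p)"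
  proof
    fix p assume p: "p \<in> P"
    have "fst p \<noteq> q" using False p by (cases p) auto
    then have "fst p < q \<or> q < fst p" by (simp add: neq_iff)
    then show "(fst p < q \<longleftrightarrow> snd p < z) \<and> (q < fst p \<longleftrightarrow> z < snd p)"
    proof
      assume "fst p < q"
      then have "snd p \<in> A" using p unfolding A_def by blast
      then have "snd p < z" using lh z by force
      then show ?thesis using \<open>fst p < q\<close> by auto
    next
      assume "q < fst p"
      then have "snd p \<in> B" using p unfolding B_def by blast
      then have "z < snd p" using lh z by force
      then show ?thesis using \<open>q < fst p\<close> by auto
    qed
  qed
  have "colour_matching c1 c2 R (insert (q, z) P)"
    unfolding colour_matching_def
  proof (intro conjI)
    show "finite (insert (q, z) P)" using fin by simp
    show "\<forall>p\<in>insert (q, z) P. \<forall>p'\<in>insert (q, z) P. (fst p < fst p') = (snd p < snd p')"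
      using mono key by auto
    show "\<forall>p\<in>insert (q, z) P. R (c1 (fst p)) (c2 (snd p))" using comp j z by auto
  qed
  then show ?thesis by blast
qed

lemma colour_matching_extend_right:
  assumes g: "colour_matching c1 c2 R P" and c1: "dense_coloring I1 c1" and c2: "dense_coloring I2 c2"
    and tot: "\<forall>b\<in>I2. \<exists>a\<in>I1. R a b"
  shows "\<exists>r. colour_matching c1 c2 R (insert (r, q) P)"
proof -
  have "colour_matching c2 c1 (\<lambda>b a. R a b) (prod.swap ` P)" using g by (simp only: colour_matching_swap)
  then obtain r where "colour_matching c2 c1 (\<lambda>b a. R a b) (insert (q, r) (prod.swap ` P))"
    using colour_matching_extend_left[OF _ c2 c1] tot by blast
  then have "colour_matching c2 c1 (\<lambda>b a. R a b) (prod.swap ` insert (r, q) P)" by simp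
  then show ?thesis by (auto simp only: colour_matching_swap)
qed

text \<open>At stage \<open>n + 1\<close> the \<open>n\<close>-th rational is put into the domain and into the range.\<close>
lemma colour_matching_chain:
  fixes c1 :: "rat \<Rightarrow> 'i" and c2 :: "rat \<Rightarrow> 'j"
  assumes c1: "dense_coloring I1 c1" and c2: "dense_coloring I2 c2"
    and tot1: "\<forall>a\<in>I1. \<exists>b\<in>I2. R a b" and tot2: "\<forall>b\<in>I2. \<exists>a\<in>I1. R a b"
  obtains S :: "nat \<Rightarrow> (rat \<times> rat) set"
  where "\<And>n. colour_matching c1 c2 R (S n)" "mono S"
    "\<And>q. \<exists>n r. (q, r) \<in> S n" "\<And>r. \<exists>n q. (q, r) \<in> S n"
proof
  let ?G = "colour_matching c1 c2 R"
  define fs where "fs P q = insert (q, SOME r. ?G (insert (q, r) P)) P" for P q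
  define bs where "bs P q = insert (SOME a. ?G (insert (a, q) P), q) P" for P q
  define S where "S = rec_nat {} (\<lambda>n P. bs (fs P (from_nat n)) (from_nat n))"
  have SS: "S (Suc n) = bs (fs (S n) (from_nat n)) (from_nat n)" for n unfolding S_def by simp
  have fsG: "?G (fs P q)" if "?G P" for P q
  proof -
    have "\<exists>r. ?G (insert (q, r) P)" using colour_matching_extend_left[OF that c1 c2 tot1] .
    then show ?thesis unfolding fs_def by (rule someI_ex)
  qed
  have bsG: "?G (bs P q)" if "?G P" for P q
  proof -
    have "\<exists>a. ?G (insert (a, q) P)" using colour_matching_extend_right[OF that c1 c2 tot2] .
    then show ?thesis unfolding bs_def by (rule someI_ex)
  qed
  show "?G (S n)" for n
  proof (induction n)
    case 0 then show ?case unfolding S_def colour_matching_def by simp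
  next
    case (Suc n) then show ?case unfolding SS using fsG bsG by blast
  qed
  show "mono S" unfolding mono_iff_le_Suc by (auto simp: SS fs_def bs_def)
  show "\<exists>n r. (q, r) \<in> S n" for q
    using SS[of "to_nat q"] unfolding bs_def fs_def by auto
  show "\<exists>n q. (q, r) \<in> S n" for r
    using SS[of "to_nat r"] unfolding bs_def by auto
qed

lemma back_and_forth_dense_colorings:
  fixes c1 :: "rat \<Rightarrow> 'i" and c2 :: "rat \<Rightarrow> 'j"
  assumes c1: "dense_coloring I1 c1" and c2: "dense_coloring I2 c2"
    and tot1: "\<forall>a\<in>I1. \<exists>b\<in>I2. R a b" and tot2: "\<forall>b\<in>I2. \<exists>a\<in>I1. R a b"
  shows "\<exists>\<phi>. surj \<phi> \<and> strict_mono \<phi> \<and> (\<forall>q. R (c1 q) (c2 (\<phi> q)))"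
proof -
  obtain S :: "nat \<Rightarrow> (rat \<times> rat) set" where G: "\<And>n. colour_matching c1 c2 R (S n)" and inc: "mono S"
    and dom: "\<And>q. \<exists>n r. (q, r) \<in> S n" and ran: "\<And>r. \<exists>n q. (q, r) \<in> S n"
    using colour_matching_chain[OF c1 c2 tot1 tot2] by metis
  define U where "U = (\<Union>n. S n)"
  have U_mono: "fst p < fst p' \<longleftrightarrow> snd p < snd p'" if pp': "p \<in> U" "p' \<in> U" for p p'
  proof -
    obtain m n where "p \<in> S m" "p' \<in> S n" using pp' unfolding U_def by blast
    then have "p \<in> S (max m n)" "p' \<in> S (max m n)"
      using monoD[OF inc, of m "max m n"] monoD[OF inc, of n "max m n"] by auto
    then show ?thesis using G[of "max m n"] unfolding colour_matching_def by blast
  qed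
  define \<phi> where "\<phi> q = (SOME r. (q, r) \<in> U)" for q
  have \<phi>U: "(q, \<phi> q) \<in> U" for q
    unfolding \<phi>_def using dom[of q] unfolding U_def by (metis UN_I UNIV_I someI_ex)
  have \<phi>_unique: "r = \<phi> q" if "(q, r) \<in> U" for q r
    using U_mono[OF that \<phi>U[of q]] U_mono[OF \<phi>U[of q] that] by (simp add: neq_iff)
  have "surj \<phi>" using ran \<phi>_unique unfolding U_def by (metis UN_I UNIV_I surjI)
  moreover have "strict_mono \<phi>" using U_mono[OF \<phi>U \<phi>U] by (simp add: strict_mono_def)
  moreover have "R (c1 q) (c2 (\<phi> q))" for q
    using \<phi>U[of q] G unfolding U_def colour_matching_def by fastforce
  ultimately show ?thesis by blast
qed

lemma ord_iso_shuf_col: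
  fixes c1 :: "rat \<Rightarrow> 'i" and c2 :: "rat \<Rightarrow> 'j" and \<phi> :: "rat \<Rightarrow> rat"
  assumes lin1: "\<And>q. Linear_order (L1 (c1 q))" and lin2: "\<And>q. Linear_order (L2 (c2 q))"
    and surj: "surj \<phi>" and mono: "strict_mono \<phi>"
    and iso: "\<And>q. ord_iso (L1 (c1 q)) (L2 (c2 (\<phi> q)))"
  shows "ord_iso (shuf_col c1 L1) (shuf_col c2 L2)"
proof -
  define f where "f q = (SOME g. iso_on g (L1 (c1 q)) (L2 (c2 (\<phi> q))))" for q
  have f: "iso_on (f q) (L1 (c1 q)) (L2 (c2 (\<phi> q)))" for q
  proof -
    have "\<exists>g. iso_on g (L1 (c1 q)) (L2 (c2 (\<phi> q)))" using iso ord_iso_iff_iso_on by blast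
    then show ?thesis unfolding f_def by (rule someI_ex)
  qed
  have F1: "(x, a) \<in> Field (shuf_col c1 L1) \<longleftrightarrow> a \<in> Field (L1 (c1 x))" for x a
    using Field_shuf_col[of L1 c1, OF Linear_order_Refl[OF lin1]] by simp
  have F2: "(x, a) \<in> Field (shuf_col c2 L2) \<longleftrightarrow> a \<in> Field (L2 (c2 x))" for x a
    using Field_shuf_col[of L2 c2, OF Linear_order_Refl[OF lin2]] by simp
  have inj\<phi>: "\<phi> x = \<phi> y \<longleftrightarrow> x = y" for x y using strict_mono_eq[OF mono] .
  have lt\<phi>: "\<phi> x < \<phi> y \<longleftrightarrow> x < y" for x y using strict_mono_less[OF mono] .
  define F where "F p = (\<phi> (fst p), f (fst p) (snd p))" for p
  have "iso_on F (shuf_col c1 L1) (shuf_col c2 L2)"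
    unfolding iso_on_def bij_betw_def inj_on_def
  proof (intro conjI ballI impI equalityI subsetI)
    fix p p' assume "p \<in> Field (shuf_col c1 L1)" "p' \<in> Field (shuf_col c1 L1)"
    moreover obtain x a y b where pp': "p = (x, a)" "p' = (y, b)" by (cases p, cases p')
    ultimately have ab: "a \<in> Field (L1 (c1 x))" "b \<in> Field (L1 (c1 y))" using F1 by auto
    then have fab: "f x a \<in> Field (L2 (c2 (\<phi> x)))" "f y b \<in> Field (L2 (c2 (\<phi> y)))"
      using iso_on_in_Field[OF f] by blast+
    show "(p, p') \<in> shuf_col c1 L1 \<longleftrightarrow> (F p, F p') \<in> shuf_col c2 L2"
    proof (cases "x = y")
      case True
      then show ?thesis using pp' ab fab iso_on_iff[OF f[of x], of a b] unfolding F_def by auto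
    next
      case False
      then have "(p, p') \<in> shuf_col c1 L1 \<longleftrightarrow> x < y" using pp' ab by auto
      moreover have "(F p, F p') \<in> shuf_col c2 L2 \<longleftrightarrow> \<phi> x < \<phi> y"
        using False pp' fab inj\<phi> unfolding F_def by auto
      ultimately show ?thesis using lt\<phi> by simp
    qed
    show "F p = F p' \<Longrightarrow> p = p'"
      using pp' ab iso_on_eq_iff[OF f[of x], of a b] inj\<phi> unfolding F_def by auto
  next
    fix w assume "w \<in> F ` Field (shuf_col c1 L1)"
    then obtain x a where "a \<in> Field (L1 (c1 x))" "w = F (x, a)" using F1 by auto
    then show "w \<in> Field (shuf_col c2 L2)" unfolding F_def using F2 iso_on_in_Field[OF f] by simp
  next
    fix w assume w: "w \<in> Field (shuf_col c2 L2)"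
    obtain y b where yb: "w = (y, b)" by (cases w)
    obtain x where x: "\<phi> x = y" using surj by (metis surjD)
    then have "b \<in> Field (L2 (c2 (\<phi> x)))" using w yb F2 by simp
    then obtain a where "a \<in> Field (L1 (c1 x))" "f x a = b" using iso_on_surj[OF f] by blast
    then have "F (x, a) = w" "(x, a) \<in> Field (shuf_col c1 L1)" unfolding F_def using x yb F1 by simp_all
    then show "w \<in> F ` Field (shuf_col c1 L1)" by blast
  qed
  then show ?thesis using ord_iso_iff_iso_on by blast
qed

lemma class_eq_imp_ord_iso_shuf_col:
  assumes c1: "dense_coloring I1 c1" and c2: "dense_coloring I2 c2"
    and lin1: "\<forall>j\<in>I1. Linear_order (L1 j)" and lin2: "\<forall>j\<in>I2. Linear_order (L2 j)"
    and ce: "class_eq I1 L1 I2 L2"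
  shows "ord_iso (shuf_col c1 L1) (shuf_col c2 L2)"
proof -
  have tot1: "\<forall>a\<in>I1. \<exists>b\<in>I2. ord_iso (L1 a) (L2 b)"
    and tot2: "\<forall>b\<in>I2. \<exists>a\<in>I1. ord_iso (L1 a) (L2 b)"
    using ce ord_iso_sym unfolding class_eq_def by blast+
  obtain \<phi> where "surj \<phi>" "strict_mono \<phi>" "\<forall>q. ord_iso (L1 (c1 q)) (L2 (c2 (\<phi> q)))"
    using back_and_forth_dense_colorings[OF c1 c2 tot1 tot2] by blast
  moreover have "Linear_order (L1 (c1 q))" "Linear_order (L2 (c2 q))" for q
    using c1 c2 lin1 lin2 unfolding dense_coloring_def by blast+
  ultimately show ?thesis by (intro ord_iso_shuf_col[of L1 c1 L2 c2]) auto
qed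

section \<open>Dense colourings\<close>

text \<open>A dense colouring of \<open>\<rat>\<close> with colours in \<open>\<nat>\<close>: the colour of \<open>q\<close> is read off the
  exponent \<open>a\<close> of the denominator \<open>2^a\<close> of \<open>q\<close> through \<open>prod_decode\<close>, so every colour belongs
  to arbitrarily large exponents, and every interval contains odd multiples of \<open>2^-a\<close> once \<open>a\<close> is
  large.\<close>
definition dyadic_index :: "rat \<Rightarrow> nat" where
  "dyadic_index q = fst (prod_decode (LEAST a. q * 2 ^ a \<in> \<int>))"

lemma odd_div_power_not_Int:
  fixes w :: int and a a' :: nat
  assumes "odd w" "a' < a" "(of_int w / 2 ^ a :: rat) * 2 ^ a' \<in> \<int>"
  shows False
proof -
  obtain m where m: "(of_int w / 2 ^ a :: rat) * 2 ^ a' = of_int m" using assms(3) Ints_cases by blast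
  have a: "a = a' + (a - a')" using assms(2) by simp
  have "(2::rat) ^ a = 2 ^ a' * 2 ^ (a - a')" by (subst a) (simp add: power_add)
  then have "(of_int w :: rat) = of_int m * 2 ^ (a - a')" using m by (simp add: field_simps)
  then have "w = m * 2 ^ (a - a')" by (metis of_int_eq_iff of_int_mult of_int_numeral of_int_power)
  moreover have "even (m * 2 ^ (a - a'))" using assms(2) by simp
  ultimately show False using assms(1) by simp
qed

lemma dyadic_index_odd:
  fixes w :: int
  assumes "odd w"
  shows "dyadic_index (of_int w / 2 ^ a) = fst (prod_decode a)"
proof -
  have "(LEAST a'. (of_int w / 2 ^ a :: rat) * 2 ^ a' \<in> \<int>) = a"
  proof (rule Least_equality)
    show "(of_int w / 2 ^ a :: rat) * 2 ^ a \<in> \<int>" by simp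
    fix a' assume "(of_int w / 2 ^ a :: rat) * 2 ^ a' \<in> \<int>"
    then show "a \<le> a'" using odd_div_power_not_Int[OF assms] by (meson not_le)
  qed
  then show ?thesis unfolding dyadic_index_def by simp
qed

lemma dyadic_index_dense:
  fixes x y :: rat
  assumes "x < y"
  shows "\<exists>z. x < z \<and> z < y \<and> dyadic_index z = n"
proof -
  obtain m :: nat where m: "2 / (y - x) < of_nat m" using reals_Archimedean2 by blast
  define a where "a = prod_encode (n, m)"
  have "m \<le> a" unfolding a_def by (rule le_prod_encode_2)
  have "of_nat m < (2::rat) ^ m" using less_exp[of m] by (metis of_nat_less_iff of_nat_numeral of_nat_power)
  also have "\<dots> \<le> 2 ^ a" using \<open>m \<le> a\<close> by (simp add: power_increasing)
  finally have big: "2 / (y - x) < (2::rat) ^ a" using m by linarith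
  define P :: rat where "P = 2 ^ a"
  have P0: "P > 0" unfolding P_def by simp
  have len: "2 < P * (y - x)" using big assms unfolding P_def by (simp add: field_simps)
  define t where "t = x * P"
  define w where "w = 2 * \<lfloor>(t + 1) / 2\<rfloor> + 1"
  have oo: "odd w" unfolding w_def by simp
  have f1: "(t + 1) / 2 - 1 < of_int \<lfloor>(t + 1) / 2\<rfloor>" by linarith
  have f2: "of_int \<lfloor>(t + 1) / 2\<rfloor> \<le> (t + 1) / 2" by linarith
  have lo: "t < of_int w" unfolding w_def using f1 by (simp add: field_simps)
  have hi: "of_int w < t + P * (y - x)" unfolding w_def using f2 len by (simp add: field_simps)
  define z where "z = of_int w / P"
  have "x < z" using lo P0 unfolding z_def t_def by (simp add: field_simps mult.commute)
  moreover have "z < y" unfolding z_def using hi P0 unfolding t_def by (simp add: field_simps)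
  moreover have "dyadic_index z = n" unfolding z_def P_def using dyadic_index_odd[OF oo, of a] unfolding a_def by simp
  ultimately show ?thesis by blast
qed

lemma dense_coloring_exists:
  assumes "countable I" "I \<noteq> {}"
  shows "\<exists>c. dense_coloring I c"
proof -
  define c where "c q = from_nat_into I (dyadic_index q)" for q
  have "dense_coloring I c"
    unfolding dense_coloring_def
  proof (intro conjI allI impI ballI)
    fix x show "c x \<in> I" unfolding c_def using from_nat_into[OF assms(2)] .
  next
    fix x y :: rat and j assume "x < y" "j \<in> I"
    then obtain n where n: "from_nat_into I n = j" using from_nat_into_to_nat_on[OF assms(1)] by blast
    obtain z where "x < z" "z < y" "dyadic_index z = n" using dyadic_index_dense[OF \<open>x < y\<close>] by blast
    then show "\<exists>z. x < z \<and> z < y \<and> c z = j" unfolding c_def using n by blast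
  qed
  then show ?thesis by blast
qed

lemma dense_coloring_surj:
  assumes "dense_coloring I c" shows "range c = I"
proof
  show "range c \<subseteq> I" using assms unfolding dense_coloring_def by blast
  show "I \<subseteq> range c"
  proof
    fix j assume "j \<in> I"
    then obtain z where "c z = j" using assms unfolding dense_coloring_def
      by (meson zero_less_one)
    then show "j \<in> range c" by blast
  qed
qed

lemma dense_coloring_Shuf:
  assumes "countable I" "I \<noteq> {}"
  shows "dense_coloring I (SOME c. dense_coloring I c)"
  using dense_coloring_exists[OF assms] by (rule someI_ex)

section \<open>The blocks of a shuffle\<close>

locale shuffle =
  fixes c :: "rat \<Rightarrow> 'i" and L :: "'i \<Rightarrow> 'a rel"
  assumes Linear_order_block: "\<And>x. Linear_order (L (c x))"
    and block_nonempty: "\<And>x. Field (L (c x)) \<noteq> {}"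
begin

lemma Refl_block: "Refl (L (c x))"
  using Linear_order_block by (rule Linear_order_Refl)

lemma in_Field_iff [simp]: "(x, a) \<in> Field (shuf_col c L) \<longleftrightarrow> a \<in> Field (L (c x))"
  using Field_shuf_col[of L c, OF Refl_block] by simp

lemma Refl_shuf_col: "Refl (shuf_col c L)"
  using Linear_order_shuf_col[of L c, OF Linear_order_block] by (rule Linear_order_Refl)

lemma iso_on_Pair:
  assumes A: "A \<subseteq> Field (L (c x))"
  shows "iso_on (Pair x) (Restr (L (c x)) A) (Restr (shuf_col c L) (Pair x ` A))"
proof -
  have "Field (Restr (L (c x)) A) = A" by (rule Refl_Field_Restr2[OF Refl_block A])
  moreover have "Field (Restr (shuf_col c L) (Pair x ` A)) = Pair x ` A"
    by (rule Refl_Field_Restr2[OF Refl_shuf_col]) (use A in auto)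
  ultimately show ?thesis using A unfolding iso_on_def bij_betw_def inj_on_def by auto
qed

lemma is_interval_Pair_image:
  assumes A: "is_interval (L (c x)) A"
  shows "is_interval (shuf_col c L) (Pair x ` A)"
  unfolding is_interval_def
proof (intro conjI ballI allI impI)
  show "Pair x ` A \<subseteq> Field (shuf_col c L)" using A unfolding is_interval_def by auto
  fix p q r assume "p \<in> Pair x ` A" "r \<in> Pair x ` A"
    and pqr: "(p, q) \<in> shuf_col c L \<and> (q, r) \<in> shuf_col c L"
  then obtain a1 a3 where "a1 \<in> A" "a3 \<in> A" "p = (x, a1)" "r = (x, a3)" by blast
  moreover obtain y b where "q = (y, b)" by (cases q)
  ultimately have "y = x" "(a1, b) \<in> L (c x)" "(b, a3) \<in> L (c x)" "q = (x, b)"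
    using pqr by auto
  then show "q \<in> Pair x ` A" using A \<open>a1 \<in> A\<close> \<open>a3 \<in> A\<close> unfolding is_interval_def by blast
qed

lemma is_interval_Pair_preimage:
  assumes J: "is_interval (shuf_col c L) (Pair x ` A)" and A: "A \<subseteq> Field (L (c x))"
  shows "is_interval (L (c x)) A"
  unfolding is_interval_def
proof (intro conjI ballI allI impI A)
  fix a d b assume "a \<in> A" "d \<in> A" "(a, b) \<in> L (c x) \<and> (b, d) \<in> L (c x)"
  moreover have "b \<in> Field (L (c x))" using calculation(3) by (blast intro: FieldI2)
  ultimately have "((x, a), (x, b)) \<in> shuf_col c L \<and> ((x, b), (x, d)) \<in> shuf_col c L"
    using A by auto
  then show "b \<in> A" using J \<open>a \<in> A\<close> \<open>d \<in> A\<close> unfolding is_interval_def by blast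
qed

lemma not_wf_between_blocks:
  assumes xy: "x < y" and a: "a \<in> Field (L (c x))" and b: "b \<in> Field (L (c y))"
    and P: "\<And>z. \<exists>d \<in> Field (L (c z)). P (z, d)"
  shows "\<not> wf (Restr (shuf_col c L - Id) {s. P s \<and> ((x, a), s) \<in> shuf_col c L \<and> (s, (y, b)) \<in> shuf_col c L})"
proof -
  define z where "z n = x + (y - x) / (of_nat n + 2)" for n :: nat
  have z_gt: "x < z n" for n unfolding z_def using xy by (simp add: field_simps)
  have z_lt: "z n < y" for n
  proof -
    have "(y - x) / (of_nat n + 2) < (y - x) / 1" using xy by (intro divide_strict_left_mono) auto
    then show ?thesis unfolding z_def by simp
  qed
  have z_dec: "z (Suc n) < z n" for n
  proof -
    have "(y - x) / (of_nat (Suc n) + 2) < (y - x) / (of_nat n + 2)"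
      using xy by (intro divide_strict_left_mono) auto
    then show ?thesis unfolding z_def by simp
  qed
  obtain d where d: "\<And>z. d z \<in> Field (L (c z)) \<and> P (z, d z)" using P by metis
  let ?f = "\<lambda>n. (z n, d (z n))"
  have "(?f (Suc n), ?f n) \<in> Restr (shuf_col c L - Id)
      {s. P s \<and> ((x, a), s) \<in> shuf_col c L \<and> (s, (y, b)) \<in> shuf_col c L}" for n
    using d a b z_gt z_lt z_dec[of n] by auto
  then have "\<exists>f. \<forall>n. (f (Suc n), f n) \<in> Restr (shuf_col c L - Id)
      {s. P s \<and> ((x, a), s) \<in> shuf_col c L \<and> (s, (y, b)) \<in> shuf_col c L}"
    by (intro exI[of _ ?f]) blast
  then show ?thesis unfolding wf_iff_no_infinite_down_chain by simp
qed

lemma well_ordered_interval_in_block: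
  assumes J: "is_interval (shuf_col c L) J" and wf: "wf (Restr (shuf_col c L - Id) J)"
    and p: "p \<in> J" and q: "q \<in> J"
  shows "fst p = fst q"
proof (rule ccontr)
  have "\<not> (fst u < fst v)" if u: "u \<in> J" and v: "v \<in> J" for u v
  proof
    assume lt: "fst u < fst v"
    have "u \<in> Field (shuf_col c L)" "v \<in> Field (shuf_col c L)"
      using u v J unfolding is_interval_def by blast+
    then have F: "snd u \<in> Field (L (c (fst u)))" "snd v \<in> Field (L (c (fst v)))"
      by (cases u, cases v, simp)+
    have "Restr (shuf_col c L - Id) {s. True \<and> ((fst u, snd u), s) \<in> shuf_col c L \<and> (s, (fst v, snd v)) \<in> shuf_col c L}
        \<subseteq> Restr (shuf_col c L - Id) J"
      using J u v unfolding is_interval_def by auto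
    then show False
      using not_wf_between_blocks[OF lt F, of "\<lambda>_. True"] wf_subset[OF wf] block_nonempty by blast
  qed
  moreover assume "fst p \<noteq> fst q"
  ultimately show False using p q by (meson neq_iff)
qed


lemma well_ordered_interval_block_part:
  assumes J: "is_interval (shuf_col c L) J" and wf: "wf (Restr (shuf_col c L - Id) J)"
    and xa: "(x, a) \<in> J"
  shows "q \<in> J \<Longrightarrow> (x, snd q) = q" and "is_interval (L (c x)) (snd ` J)"
    and "ord_iso (Restr (L (c x)) (snd ` J)) (Restr (shuf_col c L) J)"
proof -
  show q: "(x, snd q) = q" if "q \<in> J" for q
    using well_ordered_interval_in_block[OF J wf that xa] by (cases q) simp
  have "Pair x ` snd ` J = J" unfolding image_image using q by simp
  then have JP: "J = Pair x ` snd ` J" ..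
  have "J \<subseteq> Field (shuf_col c L)" using J unfolding is_interval_def by blast
  then have A: "snd ` J \<subseteq> Field (L (c x))" using q by fastforce
  show "is_interval (L (c x)) (snd ` J)" using is_interval_Pair_preimage[OF _ A] J JP by simp
  show "ord_iso (Restr (L (c x)) (snd ` J)) (Restr (shuf_col c L) J)"
    using iso_on_Pair[OF A] JP unfolding ord_iso_iff_iso_on by metis
qed

lemma starts_omega_interval_shuf_col_iff:
  "starts_omega_interval i (shuf_col c L) (x, a) \<longleftrightarrow> starts_omega_interval i (L (c x)) a"
proof
  assume "starts_omega_interval i (shuf_col c L) (x, a)"
  then obtain J where J: "is_interval (shuf_col c L) J" "(x, a) \<in> J"
    "\<forall>t\<in>J. ((x, a), t) \<in> shuf_col c L" "ord_iso (omega_times i) (Restr (shuf_col c L) J)"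
    unfolding starts_omega_interval_def by blast
  note part = well_ordered_interval_block_part[OF J(1) wf_Restr_diff_Id_of_ord_iso_omega_times[OF J(4)] J(2)]
  have "a \<in> snd ` J" using J(2) by force
  moreover have "(a, snd q) \<in> L (c x)" if "q \<in> J" for q
  proof -
    have "((x, a), (x, snd q)) \<in> shuf_col c L" using J(3) that part(1)[OF that] by simp
    then show ?thesis by simp
  qed
  then have "\<forall>t\<in>snd ` J. (a, t) \<in> L (c x)" by blast
  moreover have "ord_iso (omega_times i) (Restr (L (c x)) (snd ` J))"
    using ord_iso_trans[OF J(4) ord_iso_sym[OF part(3)]] .
  ultimately show "starts_omega_interval i (L (c x)) a"
    using part(2) unfolding starts_omega_interval_def by blast
next
  assume "starts_omega_interval i (L (c x)) a"
  then obtain A where A: "is_interval (L (c x)) A" "a \<in> A" "\<forall>t\<in>A. (a, t) \<in> L (c x)"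
    "ord_iso (omega_times i) (Restr (L (c x)) A)"
    unfolding starts_omega_interval_def by blast
  have AF: "A \<subseteq> Field (L (c x))" using A(1) unfolding is_interval_def by blast
  have "\<forall>t\<in>Pair x ` A. ((x, a), t) \<in> shuf_col c L" using A(2,3) AF by auto
  moreover have "ord_iso (omega_times i) (Restr (shuf_col c L) (Pair x ` A))"
    using ord_iso_trans[OF A(4)] iso_on_Pair[OF AF] unfolding ord_iso_iff_iso_on by blast
  ultimately show "starts_omega_interval i (shuf_col c L) (x, a)"
    using is_interval_Pair_image[OF A(1)] A(2) unfolding starts_omega_interval_def by blast
qed


end

locale good_shuffle = shuffle c L for c :: "rat \<Rightarrow> 'i" and L :: "'i \<Rightarrow> 'a rel" +
  fixes i :: nat
  assumes one_le_i: "1 \<le> i" and good_form_block: "\<And>x. good_form i (L (c x))"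
begin

lemma same_block_shuf_col_iff:
  assumes p: "p \<in> Field (shuf_col c L)" and q: "q \<in> Field (shuf_col c L)"
  shows "same_block i (shuf_col c L) p q \<longleftrightarrow> fst p = fst q"
proof
  let ?S = "shuf_col c L"
  have starts: "\<exists>d \<in> Field (L (c z)). starts_omega_interval i ?S (z, d)" for z
    using good_form_starts_omega_interval[OF one_le_i Linear_order_block good_form_block]
      starts_omega_interval_in_Field starts_omega_interval_shuf_col_iff by metis
  have "\<not> same_block i ?S u v" if uv: "fst u < fst v" "u \<in> Field ?S" "v \<in> Field ?S" for u v
  proof -
    have "snd u \<in> Field (L (c (fst u)))" "snd v \<in> Field (L (c (fst v)))"
      using uv(2,3) by (cases u, cases v, simp)+
    from not_wf_between_blocks[OF uv(1) this, of "starts_omega_interval i ?S", OF starts]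
    show ?thesis unfolding same_block_def by (rule contrapos_nn) (rule wf_subset, auto)
  qed
  moreover have "same_block i ?S u v \<longleftrightarrow> same_block i ?S v u" for u v
    unfolding same_block_def by (rule arg_cong[where f = wf]) blast
  ultimately show "fst p = fst q" if "same_block i ?S p q" using that p q by (metis neq_iff)
next
  let ?S = "shuf_col c L"
  assume eq: "fst p = fst q"
  obtain x a b where pq: "p = (x, a)" "q = (x, b)" using eq by (cases p, cases q) auto
  let ?B = "{s. starts_omega_interval i ?S s \<and> ((p, s) \<in> ?S \<and> (s, q) \<in> ?S \<or> (q, s) \<in> ?S \<and> (s, p) \<in> ?S)}"
  have "Restr (?S - Id) ?B \<subseteq> inv_image (Restr (L (c x) - Id) {a. starts_omega_interval i (L (c x)) a}) snd"
  proof
    fix st assume "st \<in> Restr (?S - Id) ?B"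
    then obtain s t where st: "st = (s, t)" "(s, t) \<in> ?S" "s \<noteq> t" "s \<in> ?B" "t \<in> ?B" by auto
    then have "fst s = x" "fst t = x" using pq by (cases s, cases t, auto)+
    then show "st \<in> inv_image (Restr (L (c x) - Id) {a. starts_omega_interval i (L (c x)) a}) snd"
      using st starts_omega_interval_shuf_col_iff by (cases s, cases t) auto
  qed
  then show "same_block i ?S p q"
    unfolding same_block_def
    using wf_subset[OF wf_inv_image[OF good_form_wf_starts_omega_interval[OF Linear_order_block good_form_block]]]
    by blast
qed

lemma same_block_class:
  assumes "(x, a) \<in> Field (shuf_col c L)"
  shows "{v \<in> Field (shuf_col c L). same_block i (shuf_col c L) (x, a) v} = Pair x ` Field (L (c x))"
  using same_block_shuf_col_iff[OF assms] by force

lemma interval_omega_times_Suc: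
  assumes J: "is_interval (shuf_col c L) J" and iso: "ord_iso (omega_times (Suc i)) (Restr (shuf_col c L) J)"
  shows "\<exists>x. \<exists>K :: 'a rel. Linear_order K \<and> ord_iso (L (c x)) (osum (omega_times (Suc i)) K)"
proof -
  have "J \<noteq> {}"
  proof
    assume "J = {}"
    then have "Field (omega_times (Suc i)) = {}"
      using iso unfolding ord_iso_def bij_betw_def by (auto simp: Field_def)
    then show False unfolding Field_omega_times by auto
  qed
  then obtain x a where xa: "(x, a) \<in> J" by auto
  note part = well_ordered_interval_block_part[OF J wf_Restr_diff_Id_of_ord_iso_omega_times[OF iso] xa]
  have "ord_iso (omega_times (Suc i)) (Restr (L (c x)) (snd ` J))"
    using ord_iso_trans[OF iso ord_iso_sym[OF part(3)]] .
  then show ?thesis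
    using good_form_interval_omega_times_Suc[OF one_le_i Linear_order_block good_form_block part(2)] by blast
qed


end

lemma ord_iso_block_of_iso_on:
  assumes G1: "good_shuffle c1 L1 i" and G2: "good_shuffle c2 L2 i"
    and F: "iso_on F (shuf_col c1 L1) (shuf_col c2 L2)"
  shows "\<exists>y. ord_iso (L1 (c1 x)) (L2 (c2 y))"
proof -
  interpret S1: good_shuffle c1 L1 i by (rule G1)
  interpret S2: good_shuffle c2 L2 i by (rule G2)
  obtain a where a: "a \<in> Field (L1 (c1 x))" using S1.block_nonempty by blast
  then have u: "(x, a) \<in> Field (shuf_col c1 L1)" by simp
  obtain y b where yb: "F (x, a) = (y, b)" by (cases "F (x, a)")
  then have "(y, b) \<in> Field (shuf_col c2 L2)" using iso_on_in_Field[OF F u] by simp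
  then have "F ` Pair x ` Field (L1 (c1 x)) = Pair y ` Field (L2 (c2 y))"
    using image_same_block_class[OF F S1.Refl_shuf_col S2.Refl_shuf_col u, of i]
      S1.same_block_class[OF u] S2.same_block_class yb by simp
  moreover have "Pair x ` Field (L1 (c1 x)) \<subseteq> Field (shuf_col c1 L1)" by auto
  ultimately have blocks: "ord_iso (Restr (shuf_col c1 L1) (Pair x ` Field (L1 (c1 x))))
      (Restr (shuf_col c2 L2) (Pair y ` Field (L2 (c2 y))))"
    using ord_iso_Restr_image[OF F S1.Refl_shuf_col S2.Refl_shuf_col] by metis
  have "ord_iso (L1 (c1 x)) (Restr (shuf_col c1 L1) (Pair x ` Field (L1 (c1 x))))"
    using S1.iso_on_Pair[OF order_refl] unfolding Restr_Field ord_iso_iff_iso_on by blast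
  moreover have "ord_iso (L2 (c2 y)) (Restr (shuf_col c2 L2) (Pair y ` Field (L2 (c2 y))))"
    using S2.iso_on_Pair[OF order_refl] unfolding Restr_Field ord_iso_iff_iso_on by blast
  ultimately show ?thesis using ord_iso_trans[OF _ ord_iso_trans[OF blocks ord_iso_sym]] by blast
qed


lemma good_shuffle_of_dense_coloring:
  assumes c: "dense_coloring I c" and i: "1 \<le> i" and L: "\<forall>j\<in>I. Linear_order (L j) \<and> good_form i (L j)"
  shows "good_shuffle c L i"
proof
  fix x
  have cx: "c x \<in> I" using c unfolding dense_coloring_def by blast
  then show lin: "Linear_order (L (c x))" and "good_form i (L (c x))" using L by blast+
  obtain a where "starts_omega_interval i (L (c x)) a"
    using good_form_starts_omega_interval[OF i lin] L cx by blast
  then show "Field (L (c x)) \<noteq> {}" using starts_omega_interval_in_Field[of i "L (c x)" a] by blast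
qed (rule i)

lemma ord_iso_shuf_col_imp_class_eq:
  assumes c1: "dense_coloring I1 c1" and c2: "dense_coloring I2 c2"
    and G1: "good_shuffle c1 L1 i" and G2: "good_shuffle c2 L2 i"
    and iso: "ord_iso (shuf_col c1 L1) (shuf_col c2 L2)"
  shows "class_eq I1 L1 I2 L2"
proof -
  obtain F where F: "iso_on F (shuf_col c1 L1) (shuf_col c2 L2)" using iso unfolding ord_iso_iff_iso_on by blast
  have "\<exists>k\<in>I2. ord_iso (L1 j) (L2 k)" if j: "j \<in> I1" for j
  proof -
    obtain x where "j = c1 x" using j dense_coloring_surj[OF c1] by blast
    moreover obtain y where "ord_iso (L1 (c1 x)) (L2 (c2 y))" using ord_iso_block_of_iso_on[OF G1 G2 F] by blast
    ultimately show ?thesis using dense_coloring_surj[OF c2] by blast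
  qed
  moreover have "\<exists>j\<in>I1. ord_iso (L2 k) (L1 j)" if k: "k \<in> I2" for k
  proof -
    obtain y where "k = c2 y" using k dense_coloring_surj[OF c2] by blast
    moreover obtain x where "ord_iso (L2 (c2 y)) (L1 (c1 x))"
      using ord_iso_block_of_iso_on[OF G2 G1 iso_on_inv_into[OF F]] by blast
    ultimately show ?thesis using dense_coloring_surj[OF c1] by blast
  qed
  ultimately show ?thesis unfolding class_eq_def by blast
qed

theorem lemma13:
  fixes i :: nat and I1 :: "'i set" and L1 :: "'i \<Rightarrow> 'a rel"
    and I2 :: "'j set" and L2 :: "'j \<Rightarrow> 'b rel"
  assumes "i \<ge> 1"
    and "countable I1" and "I1 \<noteq> {}" and "countable I2" and "I2 \<noteq> {}"
    and "\<forall>j\<in>I1. Linear_order (L1 j) \<and> good_form i (L1 j)"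
    and "\<forall>j\<in>I2. Linear_order (L2 j) \<and> good_form i (L2 j)"
  shows "(class_eq I1 L1 I2 L2 \<longleftrightarrow> ord_iso (Shuf I1 L1) (Shuf I2 L2))
    \<and> ((\<exists>J. is_interval (Shuf I1 L1) J \<and> ord_iso (omega_times (i + 1)) (Restr (Shuf I1 L1) J))
        \<longrightarrow> (\<exists>j\<in>I1. \<exists>K :: 'a rel. Linear_order K \<and> ord_iso (L1 j) (osum (omega_times (i + 1)) K)))"
proof -
  define c1 where "c1 = (SOME c. dense_coloring I1 c)"
  define c2 where "c2 = (SOME c. dense_coloring I2 c)"
  have c1: "dense_coloring I1 c1" unfolding c1_def using assms(2,3) by (rule dense_coloring_Shuf)
  have c2: "dense_coloring I2 c2" unfolding c2_def using assms(4,5) by (rule dense_coloring_Shuf)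
  have G1: "good_shuffle c1 L1 i" using good_shuffle_of_dense_coloring[OF c1 assms(1,6)] .
  have G2: "good_shuffle c2 L2 i" using good_shuffle_of_dense_coloring[OF c2 assms(1,7)] .
  have "class_eq I1 L1 I2 L2 \<longleftrightarrow> ord_iso (shuf_col c1 L1) (shuf_col c2 L2)"
    using class_eq_imp_ord_iso_shuf_col[OF c1 c2] ord_iso_shuf_col_imp_class_eq[OF c1 c2 G1 G2]
      assms(6,7) by blast
  moreover have "\<exists>j\<in>I1. \<exists>K :: 'a rel. Linear_order K \<and> ord_iso (L1 j) (osum (omega_times (Suc i)) K)"
    if "is_interval (shuf_col c1 L1) J" "ord_iso (omega_times (Suc i)) (Restr (shuf_col c1 L1) J)" for J
    using good_shuffle.interval_omega_times_Suc[OF G1 that] dense_coloring_surj[OF c1] by blast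
  ultimately show ?thesis unfolding Shuf_def c1_def c2_def by auto
qed

end
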